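(* Let $\ell$ be a prime, $L$ a finite extension of $\mathbb Q_\ell$, $\tau$ a field automorphism of $L$ of order $2$, $L^\tau$ its fixed field, $\lambda$ a uniformizer of $L^\tau$, $v_\lambda$ the valuation on $\overline{\mathbb Q_\ell}$ with $v_\lambda(\lambda)=1$, and $f$ the inertia degree of $L^\tau$ over $\mathbb Q_\ell$. Let $C=\{x\in\mathcal O_L^\times:x\tau(x)=1\}$ and $C(n)=\{x\in C:v_\lambda(x-1)\ge n\}$ for $n\ge 0$. If $\ell\neq2$, then $|C(0)/C(1)|=2\ell^f$ if $L/L^\tau$ is ramified and $|C(0)/C(1)|=\ell^f+1$ if $L/L^\tau$ is unramified. If $\ell=2$ and $0\le n\le v_\lambda(2)$, then $|C(n)/C(n+1)|\le 4^f$. *)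

theory Defs
  imports Complex_Main "HOL-Computational_Algebra.Primes"
begin

text \<open>A normalized discrete valuation on a field: w x is meaningful for x \<noteq> 0
  (the valuation of 0 is +infinity, handled by explicit case distinctions).\<close>
definition normalized_discrete_valuation :: "('a::field \<Rightarrow> int) \<Rightarrow> bool" where
  "normalized_discrete_valuation w \<longleftrightarrow>
     (\<forall>x y. x \<noteq> 0 \<longrightarrow> y \<noteq> 0 \<longrightarrow> w (x * y) = w x + w y) \<and>
     (\<forall>x y. x \<noteq> 0 \<longrightarrow> y \<noteq> 0 \<longrightarrow> x + y \<noteq> 0 \<longrightarrow> w (x + y) \<ge> min (w x) (w y)) \<and>
     (\<exists>p. p \<noteq> 0 \<and> w p = 1)"

definition val_ring :: "('a::field \<Rightarrow> int) \<Rightarrow> 'a set" where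
  "val_ring w = {x. x = 0 \<or> w x \<ge> 0}"

definition val_units :: "('a::field \<Rightarrow> int) \<Rightarrow> 'a set" where
  "val_units w = {x. x \<noteq> 0 \<and> w x = 0}"

definition residue_field :: "('a::field \<Rightarrow> int) \<Rightarrow> 'a set \<Rightarrow> 'a set set" where
  "residue_field w K = (val_ring w \<inter> K) //
     {(x, y). x \<in> val_ring w \<inter> K \<and> y \<in> val_ring w \<inter> K \<and> (x = y \<or> w (x - y) > 0)}"

definition val_complete :: "('a::field \<Rightarrow> int) \<Rightarrow> bool" where
  "val_complete w \<longleftrightarrow>
     (\<forall>s :: nat \<Rightarrow> 'a.
        (\<forall>N::int. \<exists>M. \<forall>m\<ge>M. \<forall>n\<ge>M. s m = s n \<or> w (s m - s n) \<ge> N) \<longrightarrow>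
        (\<exists>y. \<forall>N::int. \<exists>M. \<forall>n\<ge>M. s n = y \<or> w (s n - y) \<ge> N))"

text \<open>L (the carrier type, of characteristic 0) with normalized valuation w is a finite
  extension of Q_ell: complete for a discrete valuation, finite residue field of
  characteristic ell.\<close>
definition ell_adic_local_field :: "nat \<Rightarrow> ('a::field_char_0 \<Rightarrow> int) \<Rightarrow> bool" where
  "ell_adic_local_field ell w \<longleftrightarrow>
     normalized_discrete_valuation w \<and> val_complete w \<and>
     finite (residue_field w UNIV) \<and> w (of_nat ell) > 0"

definition field_aut :: "('a::field \<Rightarrow> 'a) \<Rightarrow> bool" where
  "field_aut t \<longleftrightarrow> bij t \<and> (\<forall>x y. t (x + y) = t x + t y) \<and>
     (\<forall>x y. t (x * y) = t x * t y) \<and> t 1 = 1"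

definition fixed_field :: "('a \<Rightarrow> 'a) \<Rightarrow> 'a set" where
  "fixed_field t = {x. t x = x}"

text \<open>Ramification index of L over the subfield K (w normalized on L):
  the positive generator of w(K^*).\<close>
definition ram_index :: "('a::field \<Rightarrow> int) \<Rightarrow> 'a set \<Rightarrow> int" where
  "ram_index w K = (LEAST k. k > 0 \<and> (\<exists>x\<in>K. x \<noteq> 0 \<and> w x = k))"

definition is_uniformizer :: "('a::field \<Rightarrow> int) \<Rightarrow> 'a set \<Rightarrow> 'a \<Rightarrow> bool" where
  "is_uniformizer w K p \<longleftrightarrow> p \<in> K \<and> p \<noteq> 0 \<and> w p = ram_index w K"

definition inertia_degree :: "nat \<Rightarrow> ('a::field \<Rightarrow> int) \<Rightarrow> 'a set \<Rightarrow> nat" where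
  "inertia_degree ell w K = (THE f. card (residue_field w K) = ell ^ f)"

definition v_lam :: "('a::field \<Rightarrow> int) \<Rightarrow> 'a \<Rightarrow> 'a \<Rightarrow> real" where
  "v_lam w lam x = real_of_int (w x) / real_of_int (w lam)"

definition C_grp :: "('a::field \<Rightarrow> int) \<Rightarrow> ('a \<Rightarrow> 'a) \<Rightarrow> 'a set" where
  "C_grp w t = {x \<in> val_units w. x * t x = 1}"

text \<open>C(n) = {x in C. v_lambda(x - 1) \<ge> n}, with v_lambda(0) = infinity.\<close>
definition C_filt :: "('a::field \<Rightarrow> int) \<Rightarrow> ('a \<Rightarrow> 'a) \<Rightarrow> 'a \<Rightarrow> nat \<Rightarrow> 'a set" where
  "C_filt w t lam n = {x \<in> C_grp w t. x = 1 \<or> v_lam w lam (x - 1) \<ge> real n}"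

definition quot_cosets :: "'a::field set \<Rightarrow> 'a set \<Rightarrow> 'a set set" where
  "quot_cosets G H = (\<lambda>x. (\<lambda>h. x * h) ` H) ` G"

end

theory Submission
  imports Defs
begin

text \<open>
  Let \<open>q\<close> be the size of the residue field of \<open>K = L\<^sup>\<tau>\<close>. For odd \<open>\<ell>\<close>: if \<open>L/K\<close> is
  unramified, \<open>\<tau>\<close> acts nontrivially on the residue field (otherwise successive approximation by
  elements of \<open>K\<close> would force \<open>\<tau> = id\<close>), so there is a unit \<open>\<theta>\<close> with \<open>\<tau> \<theta> = -\<theta>\<close>, and the
  Cayley transform \<open>a \<mapsto> (a + \<theta>)/(a - \<theta>)\<close> matches the \<open>q\<close> residue classes of \<open>\<O>\<^sub>K\<close> with the
  nontrivial classes of \<open>C(0)/C(1)\<close>: \<open>q + 1\<close> classes. If \<open>L/K\<close> is ramified, \<open>\<tau>\<close> is trivial on the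
  residue field, every norm-one unit is \<open>\<equiv> \<plusminus>1\<close>, and for a uniformizer with \<open>\<tau> \<pi> = -\<pi>\<close> the map
  \<open>a \<mapsto> (1 + a\<pi>)/(1 - a\<pi>)\<close> matches the classes of \<open>\<O>\<^sub>K\<close> with those of the units \<open>\<equiv> 1\<close>:
  \<open>2q\<close> classes. For \<open>\<ell> = 2\<close>, \<open>x \<mapsto> (x - 1)/\<lambda>\<^sup>n\<close> embeds \<open>C(n)/C(n+1)\<close> into \<open>\<O>/\<lambda>\<O>\<close>,
  which is spanned over \<open>\<O>\<^sub>K\<close> by two elements and so has at most \<open>q\<^sup>2\<close> classes.

  The local field theory this needs is derived from the axioms: the valuation ring is cut out by a
  polynomial condition (Hensel's lemma), so \<open>\<tau>\<close> preserves the valuation and \<open>e \<le> 2\<close>; and the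
  residue field of \<open>K\<close>, an elementary abelian \<open>\<ell>\<close>-group, has \<open>\<ell>\<close>-power order.
\<close>

section \<open>Counting equivalence classes\<close>

definition classes :: "'a set \<Rightarrow> ('a \<Rightarrow> 'a \<Rightarrow> bool) \<Rightarrow> 'a set set" where
  "classes A E = A // {(x, y). x \<in> A \<and> y \<in> A \<and> E x y}"

lemma classes_eq_image: "classes A E = (\<lambda>x. {y \<in> A. E x y}) ` A"
  unfolding classes_def quotient_def by auto

lemma class_eq_iff:
  assumes "equivp E" "x \<in> A" "y \<in> A"
  shows "{z \<in> A. E x z} = {z \<in> A. E y z} \<longleftrightarrow> E x y"
proof
  assume "{z \<in> A. E x z} = {z \<in> A. E y z}"
  then show "E x y" using assms equivp_reflp[OF assms(1), of y] by blast
next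
  assume "E x y"
  then show "{z \<in> A. E x z} = {z \<in> A. E y z}"
    using equivp_symp[OF assms(1)] equivp_transp[OF assms(1)] by blast
qed

lemma classes_cong:
  "(\<And>x y. x \<in> A \<Longrightarrow> y \<in> A \<Longrightarrow> E x y \<longleftrightarrow> E' x y) \<Longrightarrow> classes A E = classes A E'"
  unfolding classes_def by (rule arg_cong[where f = "quotient A"]) auto

lemma card_image_le_if_factors:
  assumes "finite (g ` A)" "\<And>x y. x \<in> A \<Longrightarrow> y \<in> A \<Longrightarrow> g x = g y \<Longrightarrow> h x = h y"
  shows "finite (h ` A)" "card (h ` A) \<le> card (g ` A)"
proof -
  define k where "k z = h (SOME x. x \<in> A \<and> g x = z)" for z
  have kg: "k (g x) = h x" if x: "x \<in> A" for x
  proof -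
    obtain y where "y \<in> A \<and> g y = g x" using x by blast
    then have "(SOME y. y \<in> A \<and> g y = g x) \<in> A \<and> g (SOME y. y \<in> A \<and> g y = g x) = g x"
      by (rule someI)
    then show ?thesis unfolding k_def using assms(2) x by blast
  qed
  have "h ` A = k ` g ` A" unfolding image_image by (rule image_cong) (simp_all add: kg)
  then show "finite (h ` A)" "card (h ` A) \<le> card (g ` A)"
    using assms(1) by (simp_all add: card_image_le)
qed

lemma
  assumes "equivp E" "equivp E'" "f ` A \<subseteq> B"
    and "\<And>x y. x \<in> A \<Longrightarrow> y \<in> A \<Longrightarrow> E' (f x) (f y) \<Longrightarrow> E x y"
    and "finite (classes B E')"
  shows finite_classes_if_inj: "finite (classes A E)"
    and card_classes_le_if_inj: "card (classes A E) \<le> card (classes B E')"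
proof -
  let ?g = "\<lambda>x. {y \<in> B. E' (f x) y}"
  have "?g ` A = (\<lambda>x. {y \<in> B. E' x y}) ` f ` A" by (simp only: image_image)
  also have "\<dots> \<subseteq> classes B E'" unfolding classes_eq_image using assms(3) by (rule image_mono)
  finally have sub: "?g ` A \<subseteq> classes B E'" .
  then have fin: "finite (?g ` A)" using assms(5) finite_subset by blast
  have "{z \<in> A. E x z} = {z \<in> A. E y z}" if "x \<in> A" "y \<in> A" "?g x = ?g y" for x y
  proof -
    have "f x \<in> B" "f y \<in> B" using that assms(3) by auto
    then have "E' (f x) (f y)" using that(3) class_eq_iff[OF assms(2)] by simp
    then show ?thesis using that(1,2) assms(4) class_eq_iff[OF assms(1)] by simp
  qed
  note * = card_image_le_if_factors[where g = ?g and h = "\<lambda>x. {z \<in> A. E x z}", OF fin this]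
  show "finite (classes A E)" unfolding classes_eq_image by (rule *(1))
  show "card (classes A E) \<le> card (classes B E')"
    unfolding classes_eq_image[of A] using *(2) card_mono[OF assms(5) sub] by (rule le_trans)
qed

lemma
  assumes "equivp E" "equivp E'" "f ` A \<subseteq> B"
    and "\<And>x y. x \<in> A \<Longrightarrow> y \<in> A \<Longrightarrow> E x y \<Longrightarrow> E' (f x) (f y)"
    and "\<And>y. y \<in> B \<Longrightarrow> \<exists>x\<in>A. E' y (f x)"
    and "finite (classes A E)"
  shows finite_classes_if_surj: "finite (classes B E')"
    and card_classes_le_if_surj: "card (classes B E') \<le> card (classes A E)"
proof -
  let ?g = "\<lambda>x. {y \<in> B. E' (f x) y}"
  have "?g ` A = (\<lambda>x. {y \<in> B. E' x y}) ` f ` A" by (simp only: image_image)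
  also have "\<dots> \<subseteq> classes B E'" unfolding classes_eq_image using assms(3) by (rule image_mono)
  finally have "?g ` A \<subseteq> classes B E'" .
  moreover have "classes B E' \<subseteq> ?g ` A"
    unfolding classes_eq_image
  proof (rule image_subsetI)
    fix y assume y: "y \<in> B"
    obtain x where "x \<in> A" "E' y (f x)" using assms(5)[OF y] by blast
    then show "{z \<in> B. E' y z} \<in> ?g ` A"
      using assms(3) class_eq_iff[OF assms(2), of y B "f x"] y by auto
  qed
  ultimately have eq: "classes B E' = ?g ` A" by (rule subset_antisym[rotated])
  have factors: "?g x = ?g y" if "x \<in> A" "y \<in> A" "{z \<in> A. E x z} = {z \<in> A. E y z}" for x y
  proof -
    have "f x \<in> B" "f y \<in> B" using that assms(3) by auto
    moreover have "E x y" using that class_eq_iff[OF assms(1)] by simp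
    ultimately show ?thesis using that assms(4) class_eq_iff[OF assms(2)] by simp
  qed
  have finA: "finite ((\<lambda>x. {z \<in> A. E x z}) ` A)"
    using assms(6) by (simp only: classes_eq_image)
  show "finite (classes B E')"
    unfolding eq by (rule card_image_le_if_factors(1)[OF finA factors])
  show "card (classes B E') \<le> card (classes A E)"
    unfolding eq classes_eq_image[of A] by (rule card_image_le_if_factors(2)[OF finA factors])
qed

lemma
  assumes "equivp E" "equivp E'" "f ` A \<subseteq> B"
    and "\<And>x y. x \<in> A \<Longrightarrow> y \<in> A \<Longrightarrow> E' (f x) (f y) \<longleftrightarrow> E x y"
    and "\<And>y. y \<in> B \<Longrightarrow> \<exists>x\<in>A. E' y (f x)"
  shows finite_classes_iff_bij: "finite (classes B E') \<longleftrightarrow> finite (classes A E)"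
    and card_classes_eq_if_bij: "card (classes B E') = card (classes A E)"
proof -
  have fwd: "E x y \<Longrightarrow> E' (f x) (f y)" and bwd: "E' (f x) (f y) \<Longrightarrow> E x y"
    if "x \<in> A" "y \<in> A" for x y
    using assms(4)[OF that] by simp_all
  note inj = finite_classes_if_inj[OF assms(1-3) bwd] card_classes_le_if_inj[OF assms(1-3) bwd]
  note surj = finite_classes_if_surj[OF assms(1-3) fwd assms(5)]
    card_classes_le_if_surj[OF assms(1-3) fwd assms(5)]
  show fin: "finite (classes B E') \<longleftrightarrow> finite (classes A E)"
    using inj(1) surj(1) by blast
  show "card (classes B E') = card (classes A E)"
  proof (cases "finite (classes A E)")
    case True
    then have "finite (classes B E')" using fin by simp
    with True show ?thesis using inj(2) surj(2) by (simp add: le_antisym)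
  qed (use fin in simp)
qed

lemma card_classes_Un_saturated:
  assumes E: "equivp E" and "S \<subseteq> A"
    and saturated: "\<And>x y. x \<in> S \<Longrightarrow> y \<in> A \<Longrightarrow> E x y \<Longrightarrow> y \<in> S"
    and "finite (classes S E)" "finite (classes (A - S) E)"
  shows "card (classes A E) = card (classes S E) + card (classes (A - S) E)"
proof -
  let ?c = "\<lambda>x. {y \<in> A. E x y}"
  have in_S: "?c x = {y \<in> S. E x y}" if "x \<in> S" for x
    using saturated[OF that] \<open>S \<subseteq> A\<close> by auto
  have in_diff: "?c x = {y \<in> A - S. E x y}" if x: "x \<in> A - S" for x
  proof -
    have "y \<notin> S" if "y \<in> A" "E x y" for y
      using saturated[of y x] equivp_symp[OF E that(2)] x by auto
    then show ?thesis by auto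
  qed
  have "A = S \<union> (A - S)" using \<open>S \<subseteq> A\<close> by auto
  then have "classes A E = ?c ` S \<union> ?c ` (A - S)"
    unfolding classes_eq_image by (metis image_Un)
  also have "?c ` S = classes S E"
    unfolding classes_eq_image by (rule image_cong) (simp_all add: in_S)
  also have "?c ` (A - S) = classes (A - S) E"
    unfolding classes_eq_image by (rule image_cong) (simp_all only: in_diff)
  finally have un: "classes A E = classes S E \<union> classes (A - S) E" .
  have "X \<subseteq> S" if "X \<in> classes S E" for X using that by (auto simp: classes_eq_image)
  moreover have "X \<subseteq> A - S" "X \<noteq> {}" if "X \<in> classes (A - S) E" for X
    using that equivp_reflp[OF E] by (auto simp: classes_eq_image)
  ultimately have "classes S E \<inter> classes (A - S) E = {}" by blast
  then show ?thesis unfolding un using assms(4,5) by (rule card_Un_disjoint[rotated 2])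
qed

lemma card_classes_eq_1:
  assumes E: "equivp E" and "a \<in> A" and "\<And>x. x \<in> A \<Longrightarrow> E a x"
  shows "card (classes A E) = 1"
proof -
  have "E x y" if "x \<in> A" "y \<in> A" for x y
    using equivp_transp[OF E equivp_symp[OF E assms(3)[OF that(1)]] assms(3)[OF that(2)]] .
  then have "{y \<in> A. E x y} = A" if "x \<in> A" for x using that by auto
  then have "classes A E = (\<lambda>_. A) ` A" unfolding classes_eq_image by (rule image_cong[OF refl])
  moreover have "A \<noteq> {}" using \<open>a \<in> A\<close> by auto
  ultimately show ?thesis by (simp add: image_constant_conv)
qed

lemma classes_meet_subset:
  assumes E: "equivp E" and "A \<subseteq> B" "finite (classes B E)"
    and "card (classes B E) \<le> card (classes A E)" and y: "y \<in> B"
  shows "\<exists>x\<in>A. E y x"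
proof -
  let ?c = "\<lambda>x. {z \<in> B. E x z}"
  have sub: "?c ` A \<subseteq> classes B E" unfolding classes_eq_image using \<open>A \<subseteq> B\<close> by (rule image_mono)
  then have fin: "finite (?c ` A)" using assms(3) finite_subset by blast
  have "{z \<in> A. E x z} = {z \<in> A. E x' z}" if "x \<in> A" "x' \<in> A" "?c x = ?c x'" for x x'
    using that \<open>A \<subseteq> B\<close> class_eq_iff[OF E, of x B x'] class_eq_iff[OF E, of x A x'] by auto
  then have "card (classes A E) \<le> card (?c ` A)"
    unfolding classes_eq_image[of A] by (rule card_image_le_if_factors(2)[OF fin])
  then have "?c ` A = classes B E" using card_seteq[OF assms(3) sub] assms(4) by linarith
  then obtain x where "x \<in> A" "?c y = ?c x" using y unfolding classes_eq_image by blast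
  then show ?thesis using class_eq_iff[OF E, of y B x] y \<open>A \<subseteq> B\<close> by auto
qed

lemma equivp_rel_prod: "equivp E \<Longrightarrow> equivp (rel_prod E E)"
  unfolding equivp_reflp_symp_transp reflp_def symp_def transp_def rel_prod_sel by blast

lemma card_classes_Times:
  assumes E: "equivp E" and fin: "finite (classes A E)"
  shows "finite (classes (A \<times> A) (rel_prod E E))"
    and "card (classes (A \<times> A) (rel_prod E E)) = card (classes A E) ^ 2"
proof -
  let ?c = "\<lambda>x. {y \<in> A. E x y}" and ?cc = "\<lambda>p. {q \<in> A \<times> A. rel_prod E E p q}"
  define g where "g = map_prod ?c ?c"
  have gim: "g ` (A \<times> A) = classes A E \<times> classes A E"
    unfolding g_def classes_eq_image by (rule map_prod_surj_on) simp_all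
  have fing: "finite (g ` (A \<times> A))" unfolding gim using fin by simp
  have same: "g p = g q \<longleftrightarrow> ?cc p = ?cc q" if pq: "p \<in> A \<times> A" "q \<in> A \<times> A" for p q
  proof -
    obtain a b c d where p: "p = (a, b)" and q: "q = (c, d)" and abcd: "a \<in> A" "b \<in> A" "c \<in> A" "d \<in> A"
      using pq by blast
    have "?cc p = ?cc q \<longleftrightarrow> rel_prod E E p q"
      using class_eq_iff[OF equivp_rel_prod[OF E] pq] .
    also have "\<dots> \<longleftrightarrow> ?c a = ?c c \<and> ?c b = ?c d"
      unfolding p q rel_prod_inject using class_eq_iff[OF E] abcd by simp
    finally show ?thesis unfolding g_def p q by simp
  qed
  have fac1: "?cc p = ?cc q" if "p \<in> A \<times> A" "q \<in> A \<times> A" "g p = g q" for p q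
    using same[OF that(1,2)] that(3) by (rule iffD1)
  have fac2: "g p = g q" if "p \<in> A \<times> A" "q \<in> A \<times> A" "?cc p = ?cc q" for p q
    using same[OF that(1,2)] that(3) by (rule iffD2)
  note fin_cc = card_image_le_if_factors(1)[where h = ?cc, OF fing fac1]
  note le = card_image_le_if_factors(2)[where h = ?cc, OF fing fac1]
  have "card (g ` (A \<times> A)) \<le> card (?cc ` (A \<times> A))"
    using card_image_le_if_factors(2)[where h = g, OF fin_cc fac2] .
  with le have "card (?cc ` (A \<times> A)) = card (classes A E) ^ 2"
    unfolding gim card_cartesian_product power2_eq_square by linarith
  then show "card (classes (A \<times> A) (rel_prod E E)) = card (classes A E) ^ 2"
    by (simp only: classes_eq_image)
  show "finite (classes (A \<times> A) (rel_prod E E))" using fin_cc by (simp only: classes_eq_image)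
qed


section \<open>Discretely valued fields\<close>

definition val_ge :: "('a::field \<Rightarrow> int) \<Rightarrow> int \<Rightarrow> 'a \<Rightarrow> bool" where
  "val_ge w k x \<longleftrightarrow> x = 0 \<or> k \<le> w x"

locale discrete_valuation =
  fixes w :: "'a::field \<Rightarrow> int"
  assumes normalized: "normalized_discrete_valuation w"
begin

abbreviation V :: "int \<Rightarrow> 'a \<Rightarrow> bool" where "V \<equiv> val_ge w"

abbreviation val_cong :: "int \<Rightarrow> 'a \<Rightarrow> 'a \<Rightarrow> bool" where "val_cong k x y \<equiv> V k (x - y)"

abbreviation integers :: "'a set" ("\<O>") where "\<O> \<equiv> {x. V 0 x}"

lemma w_mult: "x \<noteq> 0 \<Longrightarrow> y \<noteq> 0 \<Longrightarrow> w (x * y) = w x + w y"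
  using normalized unfolding normalized_discrete_valuation_def by blast

lemma w_add_ge: "x \<noteq> 0 \<Longrightarrow> y \<noteq> 0 \<Longrightarrow> x + y \<noteq> 0 \<Longrightarrow> min (w x) (w y) \<le> w (x + y)"
  using normalized unfolding normalized_discrete_valuation_def by blast

lemma exists_uniformizer: "\<exists>p. p \<noteq> 0 \<and> w p = 1"
  using normalized unfolding normalized_discrete_valuation_def by blast

lemma w_1 [simp]: "w 1 = 0"
  using w_mult[of 1 1] by simp

lemma w_minus_1 [simp]: "w (- 1) = 0"
  using w_mult[of "- 1" "- 1"] by simp

lemma w_minus [simp]: "w (- x) = w x"
  by (cases "x = 0") (use w_mult[of "- 1" x] in simp_all)

lemma w_inverse: "x \<noteq> 0 \<Longrightarrow> w (inverse x) = - w x"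
  using w_mult[of x "inverse x"] by simp

lemma w_divide: "x \<noteq> 0 \<Longrightarrow> y \<noteq> 0 \<Longrightarrow> w (x / y) = w x - w y"
  by (simp add: divide_inverse w_mult w_inverse)

lemma w_power: "x \<noteq> 0 \<Longrightarrow> w (x ^ n) = int n * w x"
  by (induction n) (auto simp: w_mult algebra_simps)

lemma w_power_int: "x \<noteq> 0 \<Longrightarrow> w (x powi k) = k * w x"
  by (auto simp: power_int_def w_power w_inverse)

lemma val_ge_0 [simp]: "V k 0"
  by (simp add: val_ge_def)


lemma val_ge_nonzero: "x \<noteq> 0 \<Longrightarrow> V k x \<longleftrightarrow> k \<le> w x"
  by (simp add: val_ge_def)

lemma val_ge_one_iff [simp]: "V k 1 \<longleftrightarrow> k \<le> 0"
  by (simp add: val_ge_def)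

lemma val_ge_add: "V k x \<Longrightarrow> V k y \<Longrightarrow> V k (x + y)"
  unfolding val_ge_def using w_add_ge[of x y] by fastforce

lemma val_ge_minus [simp]: "V k (- x) \<longleftrightarrow> V k x"
  by (simp add: val_ge_def)

lemma val_ge_diff: "V k x \<Longrightarrow> V k y \<Longrightarrow> V k (x - y)"
  using val_ge_add[of k x "- y"] by simp

lemma val_ge_diff_commute: "V k (x - y) \<longleftrightarrow> V k (y - x)"
  by (metis val_ge_minus minus_diff_eq)

lemma equivp_val_cong: "equivp (val_cong k)"
proof (rule equivpI)
  show "reflp (val_cong k)" by (simp add: reflp_def)
  show "symp (val_cong k)" unfolding symp_def using val_ge_diff_commute by blast
  show "transp (val_cong k)" unfolding transp_def using val_ge_add by fastforce
qed

lemma val_ge_mult: "V a x \<Longrightarrow> V b y \<Longrightarrow> V (a + b) (x * y)"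
  unfolding val_ge_def by (cases "x = 0"; cases "y = 0") (auto simp: w_mult)

lemma val_ge_mono: "V k x \<Longrightarrow> j \<le> k \<Longrightarrow> V j x"
  unfolding val_ge_def by auto

lemma val_ge_sum: "(\<And>i. i \<in> A \<Longrightarrow> V k (f i)) \<Longrightarrow> V k (sum f A)"
  by (induction A rule: infinite_finite_induct) (simp_all add: val_ge_add)

lemma val_ge_all_imp_zero: "(\<And>k. V k x) \<Longrightarrow> x = 0"
  by (metis val_ge_def add_le_same_cancel1 not_one_le_zero)

lemma val_ge_mult_iff: "y \<noteq> 0 \<Longrightarrow> V k (y * z) \<longleftrightarrow> V (k - w y) z"
  by (cases "z = 0") (auto simp: val_ge_def w_mult)

lemma val_ge_divide_iff: "y \<noteq> 0 \<Longrightarrow> V k (z / y) \<longleftrightarrow> V (k + w y) z"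
  by (cases "z = 0") (auto simp: val_ge_def w_divide)

lemma val_ge_mult_unit: "u \<noteq> 0 \<Longrightarrow> w u = 0 \<Longrightarrow> V k (u * x) \<longleftrightarrow> V k x"
  by (simp add: val_ge_mult_iff)

lemma val_ge_divide_unit: "u \<noteq> 0 \<Longrightarrow> w u = 0 \<Longrightarrow> V k (x / u) \<longleftrightarrow> V k x"
  by (simp add: val_ge_divide_iff)

lemma w_add_eq_if_less:
  assumes "x \<noteq> 0" "w x < k" "V k y"
  shows "x + y \<noteq> 0" "w (x + y) = w x"
proof -
  have "\<not> V k x" using assms(1,2) by (simp add: val_ge_def)
  then show ne: "x + y \<noteq> 0" using assms(3) by (metis add_eq_0_iff val_ge_minus)
  show "w (x + y) = w x"
  proof (cases "y = 0")
    case False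
    then have wy: "w x < w y" using assms by (simp add: val_ge_def)
    have "min (w x) (w y) \<le> w (x + y)" using w_add_ge[OF assms(1) False ne] .
    moreover have "min (w (x + y)) (w (- y)) \<le> w (x + y + - y)"
      using w_add_ge[of "x + y" "- y"] ne False assms(1) by simp
    ultimately show ?thesis using wy by (simp add: min_def split: if_splits)
  qed simp
qed

lemma val_ge_0_of_nat: "V 0 (of_nat n)"
  by (induction n) (simp_all add: val_ge_add)

lemma val_ge_0_of_int: "V 0 (of_int i)"
proof (cases i rule: int_cases)
  case (neg n)
  have "(of_int i :: 'a) = - of_nat (Suc n)" using neg by simp
  then show ?thesis using val_ge_0_of_nat[of "Suc n"] by (simp only: val_ge_minus)
qed (simp add: val_ge_0_of_nat)

lemma val_ge_0_power: "V 0 y \<Longrightarrow> V 0 (y ^ n)"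
  by (induction n) (use val_ge_mult[of 0 y 0] in simp_all)

lemma val_ge_power_diff: "V 0 x \<Longrightarrow> V 0 y \<Longrightarrow> V k (x - y) \<Longrightarrow> V k (x ^ n - y ^ n)"
proof (induction n)
  case (Suc n)
  have "x ^ Suc n - y ^ Suc n = x * (x ^ n - y ^ n) + (x - y) * y ^ n"
    by (simp add: algebra_simps)
  then show ?case
    using Suc val_ge_mult[of 0 x k] val_ge_mult[of k "x - y" 0 "y ^ n"] val_ge_0_power val_ge_add
    by auto
qed simp

lemma val_ge_0_if_1_unit: "V 1 (x - 1) \<Longrightarrow> V 0 x"
  using val_ge_add[OF val_ge_mono[of 1 "x - 1" 0], of 1] by simp

lemma one_unit_mult: "V 1 (x - 1) \<Longrightarrow> V 1 (z - 1) \<Longrightarrow> V 1 (x * z - 1)"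
proof -
  assume a: "V 1 (x - 1)" "V 1 (z - 1)"
  have "x * z - 1 = x * (z - 1) + (x - 1)" by (simp add: algebra_simps)
  moreover have "V 1 (x * (z - 1))" using val_ge_mult[OF val_ge_0_if_1_unit[OF a(1)] a(2)] by simp
  ultimately show ?thesis using val_ge_add a(1) by metis
qed

lemma one_unit_power: "V 1 (x - 1) \<Longrightarrow> V 1 (x ^ j - 1)"
  by (induction j) (auto intro: one_unit_mult)

lemma val_complete_iff:
  "val_complete w \<longleftrightarrow>
     (\<forall>s :: nat \<Rightarrow> 'a. (\<forall>N. \<exists>M. \<forall>m\<ge>M. \<forall>n\<ge>M. V N (s m - s n)) \<longrightarrow>
        (\<exists>y. \<forall>N. \<exists>M. \<forall>n\<ge>M. V N (s n - y)))"
  unfolding val_complete_def val_ge_def by simp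

lemma val_complete_limit:
  assumes "val_complete w" and increments: "\<And>m. V (int m) (s (Suc m) - s m)"
  shows "\<exists>y. \<forall>N. \<exists>M. \<forall>n\<ge>M. V N (s n - y)"
proof -
  have tail: "V (int M) (s m - s M)" if "M \<le> m" for M m
    using that
  proof (induction m rule: dec_induct)
    case (step m)
    have "V (int M) (s (Suc m) - s m)" using val_ge_mono[OF increments[of m]] step(1) by simp
    then show ?case using val_ge_add[OF _ step(3)] by fastforce
  qed simp
  have "\<exists>M. \<forall>m\<ge>M. \<forall>n\<ge>M. V N (s m - s n)" for N
  proof (intro exI allI impI)
    fix m n assume "nat N \<le> m" "nat N \<le> n"
    then have "V (int (nat N)) (s m - s (nat N) - (s n - s (nat N)))"
      using tail val_ge_diff by blast
    then show "V N (s m - s n)" using val_ge_mono by fastforce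
  qed
  then show ?thesis using assms(1) unfolding val_complete_iff by blast
qed

text \<open>One Newton step for \<open>X\<^sup>n = a\<close>: since \<open>n\<close> is a unit and \<open>y\<close> is a 1-unit, the derivative
  \<open>n y\<^sup>n\<^sup>-\<^sup>1\<close> may be replaced by \<open>n\<close>.\<close>

lemma newton_step:
  assumes y: "V 1 (y - 1)" and err: "V k (a - y ^ n)" "1 \<le> k"
    and n: "of_nat n \<noteq> (0::'a)" "w (of_nat n) = 0"
  defines "d \<equiv> (a - y ^ n) / of_nat n"
  shows "V k d" "V 1 (y + d - 1)" "V (k + 1) (a - (y + d) ^ n)"
proof -
  show dV: "V k d" unfolding d_def using val_ge_divide_unit[OF n] err(1) by simp
  show y': "V 1 (y + d - 1)"
    using val_ge_add[OF y val_ge_mono[OF dV err(2)]] by (simp add: algebra_simps)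
  have "a - (y + d) ^ n = of_nat n * d - ((y + d) ^ n - y ^ n)"
    unfolding d_def using n(1) by simp
  also have "(y + d) ^ n - y ^ n = d * (\<Sum>i<n. y ^ (n - Suc i) * (y + d) ^ i)"
    using power_diff_sumr2[of "y + d" n y] by simp
  also have "of_nat n * d = d * (\<Sum>i<n. 1)" by simp
  finally have eq: "a - (y + d) ^ n = d * (\<Sum>i<n. 1 - y ^ (n - Suc i) * (y + d) ^ i)"
    by (simp add: sum_subtractf right_diff_distrib)
  have "V 1 (\<Sum>i<n. 1 - y ^ (n - Suc i) * (y + d) ^ i)"
    using one_unit_mult[OF one_unit_power[OF y] one_unit_power[OF y']]
    by (intro val_ge_sum) (simp add: val_ge_diff_commute)
  then show "V (k + 1) (a - (y + d) ^ n)" unfolding eq using val_ge_mult[OF dV] by blast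
qed

lemma newton_sequence:
  assumes a: "V 1 (a - 1)" and n: "of_nat n \<noteq> (0::'a)" "w (of_nat n) = 0"
  obtains s where "\<And>j. V (int j) (s (Suc j) - s j)" "\<And>j. V 1 (s j - 1)" "\<And>j. V (int j + 1) (a - s j ^ n)"
proof -
  define s where "s j = ((\<lambda>y. y + (a - y ^ n) / of_nat n) ^^ j) 1" for j
  have s_Suc: "s (Suc j) = s j + (a - s j ^ n) / of_nat n" for j
    unfolding s_def by simp
  have inv: "V 1 (s j - 1) \<and> V (int j + 1) (a - s j ^ n)" for j
  proof (induction j)
    case 0
    then show ?case using a by (simp add: s_def)
  next
    case (Suc j)
    then show ?case using newton_step[of "s j" "int j + 1" a n] n by (simp add: s_Suc add.commute)
  qed
  moreover have "V (int j) (s (Suc j) - s j)" for j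
    using newton_step(1)[of "s j" "int j + 1" a n] inv n val_ge_mono by (simp add: s_Suc)
  ultimately show ?thesis using that by blast
qed

lemma hensel_root:
  assumes "val_complete w" and a: "V 1 (a - 1)"
    and n: "of_nat n \<noteq> (0::'a)" "w (of_nat n) = 0"
  shows "\<exists>y. y ^ n = a"
proof -
  obtain s where s: "\<And>j. V (int j) (s (Suc j) - s j)" "\<And>j. V 1 (s j - 1)"
    "\<And>j. V (int j + 1) (a - s j ^ n)"
    using newton_sequence[OF a n] by blast
  then obtain y where y: "\<forall>N. \<exists>M. \<forall>j\<ge>M. V N (s j - y)"
    using val_complete_limit[OF assms(1)] by blast
  have "V N (y ^ n - a)" for N
  proof -
    obtain M where M: "\<forall>j\<ge>M. V (max N 1) (s j - y)" using y by blast
    define j where "j = max M (nat N)"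
    have sj: "V (max N 1) (s j - y)" using M unfolding j_def by simp
    have sj0: "V 0 (s j)" using val_ge_0_if_1_unit s(2) by blast
    have "V 0 (s j - (s j - y))" using val_ge_diff[OF sj0 val_ge_mono[OF sj]] by simp
    then have "V (max N 1) (y ^ n - s j ^ n)"
      using val_ge_power_diff[OF _ sj0] sj val_ge_diff_commute by simp
    moreover have "V (max N 1) (a - s j ^ n)"
      using val_ge_mono[OF s(3)[of j]] unfolding j_def by simp
    ultimately have "V (max N 1) (y ^ n - s j ^ n + - (a - s j ^ n))"
      by (simp only: val_ge_add val_ge_minus)
    then show ?thesis using val_ge_mono[of "max N 1" _ N] by simp
  qed
  then have "y ^ n - a = 0" by (rule val_ge_all_imp_zero)
  then show ?thesis by auto
qed

end


section \<open>Finite extensions of \<open>\<rat>\<^sub>\<ell>\<close>\<close>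

locale ell_adic_field = discrete_valuation w for w :: "'a::field_char_0 \<Rightarrow> int" +
  fixes ell :: nat
  assumes prime_ell: "prime ell" and complete: "val_complete w"
    and finite_residue_field: "finite (residue_field w UNIV)"
    and w_ell_pos: "0 < w (of_nat ell)"
begin

lemma ell_gt_1: "1 < ell"
  using prime_ell prime_gt_1_nat by blast

lemma w_of_nat_eq_0:
  assumes "\<not> ell dvd n"
  shows "w (of_nat n) = 0"
proof (rule ccontr)
  assume "w (of_nat n) \<noteq> 0"
  moreover have "n \<noteq> 0" using assms by (metis dvd_0_right)
  ultimately have "V 1 (of_nat n :: 'a)" using val_ge_0_of_nat[of n] by (simp add: val_ge_def)
  then have n: "V 1 (of_int v * of_nat n :: 'a)" for v
    using val_ge_mult[OF val_ge_0_of_int] by fastforce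
  have "V 1 (of_nat ell :: 'a)" using w_ell_pos by (simp add: val_ge_def)
  then have ell: "V 1 (of_int u * of_nat ell :: 'a)" for u
    using val_ge_mult[OF val_ge_0_of_int] by fastforce
  have "coprime (int ell) (int n)"
    using prime_imp_coprime[OF prime_ell assms] by simp
  then obtain u v where "u * int ell + v * int n = 1"
    using bezout_int[of "int ell" "int n"] by (auto simp: coprime_iff_gcd_eq_1)
  then have "of_int u * of_nat ell + of_int v * of_nat n = (1::'a)"
    by (metis of_int_1 of_int_add of_int_mult of_int_of_nat_eq)
  then show False using val_ge_add[OF ell n] by (metis val_ge_one_iff zero_less_one not_le)
qed

text \<open>The valuation ring is cut out by a polynomial condition: for \<open>p\<close> prime to \<open>\<ell>\<close> and larger
  than \<open>w \<ell>\<close>, \<open>1 + \<ell> x\<^sup>p\<close> has a \<open>p\<close>-th root iff \<open>w x \<ge> 0\<close> (Hensel, resp. comparing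
  valuations). Hence every field endomorphism preserves it.\<close>

lemma val_ge_0_iff_root_exists:
  assumes p: "\<not> ell dvd p" "w (of_nat ell) < int p"
  shows "V 0 x \<longleftrightarrow> (\<exists>y. y ^ p = 1 + of_nat ell * x ^ p)"
proof
  have p0: "p \<noteq> 0" using p(1) by (metis dvd_0_right)
  assume "V 0 x"
  then have "V 1 (of_nat ell * x ^ p)"
    using val_ge_mult[OF _ val_ge_0_power, of 1 "of_nat ell"] w_ell_pos by (simp add: val_ge_def)
  then show "\<exists>y. y ^ p = 1 + of_nat ell * x ^ p"
    using hensel_root[OF complete, of "1 + of_nat ell * x ^ p" p] w_of_nat_eq_0[OF p(1)] p0 by simp
next
  assume "\<exists>y. y ^ p = 1 + of_nat ell * x ^ p"
  then obtain y where y: "y ^ p = 1 + of_nat ell * x ^ p" by blast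
  show "V 0 x"
  proof (rule ccontr)
    assume "\<not> V 0 x"
    then have x: "x \<noteq> 0" "w x \<le> - 1" by (auto simp: val_ge_def)
    define z :: 'a where "z = of_nat ell * x ^ p"
    have ell0: "(of_nat ell :: 'a) \<noteq> 0" using ell_gt_1 by simp
    have z0: "z \<noteq> 0" unfolding z_def using x ell0 by simp
    have wz: "w z = w (of_nat ell) + int p * w x" unfolding z_def using x ell0 by (simp add: w_mult w_power)
    moreover have "int p * w x \<le> - int p" using x(2) mult_left_mono[of "w x" "- 1" "int p"] by simp
    ultimately have "w z < 0" using p(2) by linarith
    then have s: "z + 1 \<noteq> 0" "w (z + 1) = w z" using w_add_eq_if_less[OF z0, of 0 1] by simp_all
    then have y0: "y \<noteq> 0" using y p unfolding z_def by (metis add.commute zero_power dvd_0_right gr0I)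
    have "int p * w y = w z" using s y w_power[OF y0, of p] unfolding z_def by (simp add: add.commute)
    then have "w (of_nat ell) = int p * (w y - w x)" using wz by (simp add: algebra_simps)
    then have "int p dvd w (of_nat ell)" by simp
    then show False using p(2) w_ell_pos zdvd_imp_le by fastforce
  qed
qed

lemma endomorphism_preserves_val_ring:
  assumes "\<And>x y. s (x + y) = s x + s y" "\<And>x y. s (x * y) = s x * s y" "s 1 = 1"
    and "V 0 x"
  shows "V 0 (s x)"
proof -
  define p where "p = Suc (ell * nat (w (of_nat ell)))"
  have "\<not> ell dvd p"
    using ell_gt_1 unfolding p_def by (metis Suc_eq_plus1 dvd_add_right_iff dvd_triv_left nat_dvd_1_iff_1 less_irrefl)
  moreover have "w (of_nat ell) < int p"
  proof -
    have "w (of_nat ell) \<le> int ell * w (of_nat ell)"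
      using ell_gt_1 w_ell_pos mult_right_mono[of 1 "int ell" "w (of_nat ell)"] by simp
    moreover have "int p = 1 + int ell * w (of_nat ell)" unfolding p_def using w_ell_pos by simp
    ultimately show ?thesis by linarith
  qed
  ultimately have p: "\<not> ell dvd p" "w (of_nat ell) < int p" by blast+
  have "s 0 = 0" using assms(1)[of 0 0] by simp
  then have s_of_nat: "s (of_nat n) = of_nat n" for n by (induction n) (simp_all add: assms(1,3))
  have s_power: "s (y ^ n) = s y ^ n" for y n by (induction n) (simp_all add: assms(2,3))
  obtain y where "y ^ p = 1 + of_nat ell * x ^ p"
    using val_ge_0_iff_root_exists[OF p] assms(4) by blast
  then have "s y ^ p = 1 + of_nat ell * s x ^ p"
    by (metis assms(1-3) s_of_nat s_power)
  then show ?thesis using val_ge_0_iff_root_exists[OF p] by blast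
qed

lemma residue_field_eq_classes: "residue_field w A = classes (\<O> \<inter> A) (val_cong 1)"
proof -
  have "val_ring w = \<O>" unfolding val_ring_def val_ge_def by auto
  moreover have "(x = y \<or> 0 < w (x - y)) \<longleftrightarrow> val_cong 1 x y" for x y by (auto simp: val_ge_def)
  ultimately show ?thesis unfolding residue_field_def classes_def by simp
qed

lemma finite_residue_classes: "A \<subseteq> \<O> \<Longrightarrow> finite (classes A (val_cong 1))"
  using finite_classes_if_inj[OF equivp_val_cong equivp_val_cong, of id A \<O>] finite_residue_field
  by (simp add: residue_field_eq_classes)

end


section \<open>Elementary abelian quotients\<close>

text \<open>A finite quotient \<open>G/I\<close> of additive groups that is killed by the prime \<open>p\<close> has \<open>p\<close>-power
  order: adjoining one element \<open>u\<close> to an intermediate group \<open>S\<close> multiplies the number of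
  classes by exactly \<open>p\<close>, the translates \<open>S + j u\<close> for \<open>j < p\<close> being disjoint.\<close>

lemma of_int_mult_mem_if_diff_closed:
  fixes A :: "'a::ring_1 set"
  assumes A: "0 \<in> A" "\<And>x y. x \<in> A \<Longrightarrow> y \<in> A \<Longrightarrow> x - y \<in> A" and x: "x \<in> A"
  shows "of_int m * x \<in> A"
proof -
  have add: "a + b \<in> A" if "a \<in> A" "b \<in> A" for a b
    using A(2)[OF that(1) A(2)[OF A(1) that(2)]] by simp
  have nat: "of_nat n * x \<in> A" for n
    by (induction n) (simp_all add: A(1) add x algebra_simps)
  show ?thesis
  proof (cases m rule: int_cases)
    case (neg n)
    then have "(of_int m :: 'a) = - of_nat (Suc n)" by simp
    then have "of_int m * x = 0 - of_nat (Suc n) * x" by (simp only: minus_mult_left diff_0)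
    then show ?thesis using A(2)[OF A(1) nat[of "Suc n"]] by simp
  qed (simp add: nat)
qed

locale elementary_abelian_quotient =
  fixes p :: nat and G I :: "'a::ring_1 set"
  assumes prime_p: "prime p"
    and G_0: "0 \<in> G" and G_diff: "\<And>x y. x \<in> G \<Longrightarrow> y \<in> G \<Longrightarrow> x - y \<in> G"
    and I_subset: "I \<subseteq> G" and I_0: "0 \<in> I" and I_diff: "\<And>x y. x \<in> I \<Longrightarrow> y \<in> I \<Longrightarrow> x - y \<in> I"
    and p_torsion: "\<And>x. x \<in> G \<Longrightarrow> of_nat p * x \<in> I"
    and finite_classes: "finite (classes G (\<lambda>x y. x - y \<in> I))"
begin

abbreviation cong_I :: "'a \<Rightarrow> 'a \<Rightarrow> bool" where "cong_I x y \<equiv> x - y \<in> I"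

lemma equivp_cong_I: "equivp cong_I"
proof (rule equivpI)
  show "reflp cong_I" using I_0 by (simp add: reflp_def)
  show "symp cong_I" unfolding symp_def using I_diff[OF I_0] by (metis minus_diff_eq diff_0)
  have "x - z \<in> I" if "x - y \<in> I" "y - z \<in> I" for x y z
    using I_diff[OF that(1) I_diff[OF I_0 that(2)]] by simp
  then show "transp cong_I" unfolding transp_def by blast
qed

lemma finite_classes_subset: "A \<subseteq> G \<Longrightarrow> finite (classes A cong_I)"
  using finite_classes_if_inj[OF equivp_cong_I equivp_cong_I, of id A G] finite_classes by simp

definition intermediate :: "'a set \<Rightarrow> bool" where
  "intermediate S \<longleftrightarrow> I \<subseteq> S \<and> S \<subseteq> G \<and> (\<forall>x\<in>S. \<forall>y\<in>S. x - y \<in> S)"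

lemma intermediate_I: "intermediate I"
  unfolding intermediate_def using I_subset I_diff by blast

lemma G_int_mult: "x \<in> G \<Longrightarrow> of_int m * x \<in> G"
  using of_int_mult_mem_if_diff_closed[of G] G_0 G_diff by blast

context
  fixes S assumes S: "intermediate S"
begin

lemma S_subset: "S \<subseteq> G" and I_subset_S: "I \<subseteq> S" and S_diff: "x \<in> S \<Longrightarrow> y \<in> S \<Longrightarrow> x - y \<in> S"
  using S unfolding intermediate_def by blast+

lemma S_0: "0 \<in> S"
  using I_0 I_subset_S by blast

lemma S_add: "x \<in> S \<Longrightarrow> y \<in> S \<Longrightarrow> x + y \<in> S"
  using S_diff[of x "0 - y"] S_diff[OF S_0] by simp

lemma S_int_mult: "x \<in> S \<Longrightarrow> of_int m * x \<in> S"
  using of_int_mult_mem_if_diff_closed[of S] S_0 S_diff by blast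

lemma S_saturated: "x \<in> S \<Longrightarrow> y \<in> G \<Longrightarrow> cong_I x y \<Longrightarrow> y \<in> S"
  using S_diff[of x "x - y"] I_subset_S by auto

lemma cong_mod_p_in_S: "u \<in> G \<Longrightarrow> of_int m * of_nat p * u \<in> S"
  using S_int_mult[of "of_nat p * u" m] p_torsion I_subset_S by (auto simp: mult.assoc)

definition translate :: "'a \<Rightarrow> nat \<Rightarrow> 'a set" where
  "translate u j = {x \<in> G. x - of_nat j * u \<in> S}"

definition span :: "'a \<Rightarrow> nat \<Rightarrow> 'a set" where
  "span u k = {x \<in> G. \<exists>j<k. x - of_nat j * u \<in> S}"

lemma intermediate_span:
  assumes u: "u \<in> G"
  shows "intermediate (span u p)"
proof -
  have "0 < p" using prime_p prime_gt_0_nat by blast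
  then have "I \<subseteq> span u p" unfolding span_def using I_subset I_subset_S by force
  moreover have "x - y \<in> span u p" if x: "x \<in> span u p" and y: "y \<in> span u p" for x y
  proof -
    obtain i j where ij: "i < p" "j < p" "x - of_nat i * u \<in> S" "y - of_nat j * u \<in> S"
      and xy: "x \<in> G" "y \<in> G" using x y unfolding span_def by blast
    define r where "r = (int i - int j) mod int p"
    define m where "m = (int i - int j) div int p"
    have r: "0 \<le> r" "r < int p" unfolding r_def using \<open>0 < p\<close> by auto
    have "int i = int j + r + m * int p" unfolding r_def m_def by simp
    then have "(of_int (int i) :: 'a) = of_int (int j + r + m * int p)" by (rule arg_cong)
    then have "(of_nat i :: 'a) = of_nat j + of_nat (nat r) + of_int m * of_nat p"
      using r(1) by simp
    then have iu: "of_nat i * u = of_nat j * u + of_nat (nat r) * u + of_int m * of_nat p * u"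
      by (simp add: distrib_right)
    have "(x - y) - of_nat (nat r) * u
        = ((x - of_nat i * u) - (y - of_nat j * u)) + of_int m * of_nat p * u"
      unfolding iu by (simp add: algebra_simps)
    also have "\<dots> \<in> S"
      by (rule S_add[OF S_diff[OF ij(3,4)] cong_mod_p_in_S[OF u]])
    finally have "(x - y) - of_nat (nat r) * u \<in> S" .
    moreover have "nat r < p" using r by simp
    ultimately show ?thesis unfolding span_def using G_diff[OF xy] by blast
  qed
  ultimately show ?thesis unfolding intermediate_def span_def by blast
qed

lemma translate_disjoint:
  assumes u: "u \<in> G" "u \<notin> S" and ij: "i < j" "j < p"
  shows "translate u i \<inter> translate u j = {}"
proof (rule ccontr)
  assume "translate u i \<inter> translate u j \<noteq> {}"
  then obtain x where "x - of_nat i * u \<in> S" "x - of_nat j * u \<in> S" unfolding translate_def by blast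
  moreover have "(x - of_nat i * u) - (x - of_nat j * u) = of_nat (j - i) * u"
    using ij by (simp add: of_nat_diff algebra_simps)
  ultimately have "of_nat (j - i) * u \<in> S" using S_diff by metis
  moreover define d where "d = j - i"
  ultimately have d: "of_nat d * u \<in> S" by simp
  have "\<not> p dvd d" using ij unfolding d_def by (simp add: nat_dvd_not_less)
  then have "coprime (int p) (int d)" using prime_imp_coprime[OF prime_p] by simp
  then obtain a c where "a * int p + c * int d = 1"
    using bezout_int[of "int p" "int d"] by (auto simp: coprime_iff_gcd_eq_1)
  then have "(of_int a * of_nat p + of_int c * of_nat d :: 'a) = 1"
    by (metis of_int_1 of_int_add of_int_mult of_int_of_nat_eq)
  then have "u = (of_int a * of_nat p + of_int c * of_nat d) * u" by simp
  also have "\<dots> = of_int c * (of_nat d * u) + of_int a * of_nat p * u"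
    by (simp add: algebra_simps)
  also have "\<dots> \<in> S" by (rule S_add[OF S_int_mult[OF d] cong_mod_p_in_S[OF u(1)]])
  finally have "u \<in> S" .
  then show False using u(2) by blast
qed

lemma card_classes_translate:
  assumes "u \<in> G"
  shows "card (classes (translate u j) cong_I) = card (classes S cong_I)"
proof (rule card_classes_eq_if_bij[OF equivp_cong_I equivp_cong_I])
  have "of_nat j * u \<in> G" using G_int_mult[OF assms, of "int j"] by simp
  then show "(\<lambda>x. x + of_nat j * u) ` S \<subseteq> translate u j"
    unfolding translate_def using S_subset G_diff[OF _ G_diff[OF G_0]] by force
  show "\<exists>x\<in>S. cong_I y (x + of_nat j * u)" if "y \<in> translate u j" for y
    using that I_0 unfolding translate_def by (intro bexI[of _ "y - of_nat j * u"]) auto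
qed simp

lemma card_classes_span:
  assumes u: "u \<in> G" "u \<notin> S" and "k \<le> p"
  shows "card (classes (span u k) cong_I) = k * card (classes S cong_I)"
  using \<open>k \<le> p\<close>
proof (induction k)
  case 0
  then show ?case by (simp add: span_def classes_eq_image)
next
  case (Suc k)
  have "translate u j \<inter> translate u k = {}" if "j < k" for j
    using translate_disjoint[OF u that] Suc.prems by simp
  then have un: "span u (Suc k) - translate u k = span u k"
    and sub: "translate u k \<subseteq> span u (Suc k)"
    unfolding span_def translate_def by (auto simp: less_Suc_eq)
  have "card (classes (span u (Suc k)) cong_I)
      = card (classes (translate u k) cong_I) + card (classes (span u (Suc k) - translate u k) cong_I)"
  proof (rule card_classes_Un_saturated[OF equivp_cong_I sub])
    show "y \<in> translate u k" if "x \<in> translate u k" "y \<in> span u (Suc k)" "cong_I x y" for x y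
      using that S_saturated[of "x - of_nat k * u" "y - of_nat k * u"]
        G_diff[OF _ G_int_mult[OF u(1), of "int k"]]
      unfolding translate_def span_def by auto
    show "finite (classes (translate u k) cong_I)" "finite (classes (span u (Suc k) - translate u k) cong_I)"
      by (rule finite_classes_subset; auto simp: translate_def span_def)+
  qed
  then show ?case unfolding un card_classes_translate[OF u(1)] using Suc by simp
qed

end

lemma card_classes_I: "card (classes I cong_I) = 1"
  by (rule card_classes_eq_1[OF equivp_cong_I I_0]) (simp add: I_diff[OF I_0, simplified])

lemma card_classes_intermediate_prime_power:
  "intermediate S \<Longrightarrow> card (classes S cong_I) = p ^ j \<Longrightarrow> \<exists>f. card (classes G cong_I) = p ^ f"
proof (induction "card (classes G cong_I) - card (classes S cong_I)" arbitrary: S j rule: less_induct)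
  case less
  show ?case
  proof (cases "S = G")
    case False
    then obtain u where u: "u \<in> G" "u \<notin> S" using S_subset[OF less.prems(1)] by blast
    define S' where "S' = span S u p"
    have S': "intermediate S'" unfolding S'_def using intermediate_span[OF less.prems(1) u(1)] .
    have card: "card (classes S' cong_I) = p ^ Suc j"
      unfolding S'_def using card_classes_span[OF less.prems(1) u le_refl] less.prems(2) by simp
    have "card (classes S' cong_I) \<le> card (classes G cong_I)"
      using card_classes_le_if_inj[OF equivp_cong_I equivp_cong_I, of id S' G] S_subset[OF S']
        finite_classes by simp
    moreover have "p ^ j < p ^ Suc j" using prime_gt_1_nat[OF prime_p] by simp
    ultimately have "card (classes G cong_I) - card (classes S' cong_I)
        < card (classes G cong_I) - card (classes S cong_I)"
      using less.prems(2) card by linarith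
    then show ?thesis using less.hyps S' card by blast
  qed (use less.prems in blast)
qed

theorem card_classes_prime_power: "\<exists>f. card (classes G cong_I) = p ^ f"
  using card_classes_intermediate_prime_power[OF intermediate_I] card_classes_I by (metis power_0)

end


section \<open>Quadratic extensions of local fields\<close>

locale involutive_local_field = ell_adic_field w ell for w :: "'a::field_char_0 \<Rightarrow> int" and ell +
  fixes t :: "'a \<Rightarrow> 'a" and lam :: 'a
  assumes aut: "field_aut t" and involution: "t \<circ> t = id" and nontrivial: "t \<noteq> id"
    and uniformizer: "is_uniformizer w (fixed_field t) lam"
begin

lemma t_add: "t (x + y) = t x + t y" and t_mult: "t (x * y) = t x * t y" and t_1 [simp]: "t 1 = 1"
  using aut unfolding field_aut_def by blast+

lemma t_t [simp]: "t (t x) = x"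
  using involution by (metis comp_apply id_apply)

lemma t_0 [simp]: "t 0 = 0"
  using t_add[of 0 0] by simp

lemma t_minus: "t (- x) = - t x"
  using t_add[of x "- x"] by (simp add: eq_neg_iff_add_eq_0 add.commute)

lemma t_diff: "t (x - y) = t x - t y"
  using t_add[of x "- y"] t_minus by simp

lemma t_eq_0_iff [simp]: "t x = 0 \<longleftrightarrow> x = 0"
  by (metis t_t t_0)

lemma t_inverse: "t (inverse x) = inverse (t x)"
proof (cases "x = 0")
  case False
  then have "t x * t (inverse x) = 1" using t_mult[of x "inverse x"] by simp
  then show ?thesis by (metis inverse_unique)
qed simp

lemma t_divide: "t (x / y) = t x / t y"
  by (simp add: divide_inverse t_mult t_inverse)

lemma t_power: "t (x ^ n) = t x ^ n"
  by (induction n) (simp_all add: t_mult)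

lemma t_power_int: "t (x powi k) = t x powi k"
  by (simp add: power_int_def t_power t_inverse)

lemma t_of_nat [simp]: "t (of_nat n) = of_nat n"
  by (induction n) (simp_all add: t_add)

lemma t_numeral [simp]: "t (numeral n) = numeral n"
  by (metis of_nat_numeral t_of_nat)

lemma val_ge_0_t_iff: "V 0 (t x) \<longleftrightarrow> V 0 x"
  using endomorphism_preserves_val_ring[OF t_add t_mult t_1] t_t by metis

text \<open>\<open>\<tau>\<close> preserves the valuation ring, hence the units and the maximal ideal; the valuation of
  a uniformizer \<open>p\<close> is preserved because \<open>p = \<tau> (\<tau> p)\<close> cannot have valuation \<open>\<ge> 2\<close>.\<close>

lemma w_t [simp]: "w (t x) = w x"
proof -
  have unit: "w (t u) = 0" if "u \<noteq> 0" "w u = 0" for u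
    using that val_ge_0_t_iff[of u] val_ge_0_t_iff[of "inverse u"]
    by (simp add: val_ge_def t_inverse w_inverse)
  have pos: "0 < w (t x)" if "x \<noteq> 0" "0 < w x" for x
  proof -
    have "V 0 (t x)" using that val_ge_0_t_iff[of x] by (simp add: val_ge_def)
    moreover have "\<not> V 0 (inverse (t x))"
      using that val_ge_0_t_iff[of "inverse x"] by (simp add: val_ge_def t_inverse w_inverse)
    ultimately show ?thesis using that by (simp add: val_ge_def w_inverse)
  qed
  obtain p where p: "p \<noteq> 0" "w p = 1" using exists_uniformizer by blast
  have wtp: "w (t p) = 1"
  proof (rule ccontr)
    assume "w (t p) \<noteq> 1"
    then have "2 \<le> w (t p)" using pos[OF p(1)] p(2) by simp
    moreover have "p = t p * t (t p / p)" using p by (simp add: t_mult[symmetric])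
    then have "w p = w (t p) + w (t (t p / p))" using p w_mult[of "t p" "t (t p / p)"] by simp
    moreover have "0 < w (t (t p / p))"
      using pos[of "t p / p"] p calculation(1) by (simp add: w_divide)
    ultimately show False using p(2) by simp
  qed
  show ?thesis
  proof (cases "x = 0")
    case False
    define u where "u = x / p powi w x"
    have "u \<noteq> 0" "w u = 0" using False p unfolding u_def by (simp_all add: w_divide w_power_int)
    then have "w (t u) = 0" by (rule unit)
    moreover have "t x = t u * t p powi w x" unfolding u_def using p by (simp add: t_mult t_divide t_power_int)
    ultimately show ?thesis using p \<open>u \<noteq> 0\<close> wtp by (simp add: w_mult w_power_int)
  qed simp
qed

lemma val_ge_t_iff [simp]: "V k (t x) \<longleftrightarrow> V k x"
  by (simp add: val_ge_def)

abbreviation K :: "'a set" where "K \<equiv> fixed_field t"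

abbreviation e :: int where "e \<equiv> ram_index w K"

abbreviation integers_K :: "'a set" ("\<O>\<^sub>K") where "\<O>\<^sub>K \<equiv> {x. V 0 x \<and> t x = x}"

abbreviation q :: nat where "q \<equiv> card (classes \<O>\<^sub>K (val_cong 1))"

lemma integers_K_subset: "\<O>\<^sub>K \<subseteq> \<O>"
  by blast

lemma in_K_iff [simp]: "x \<in> K \<longleftrightarrow> t x = x"
  by (simp add: fixed_field_def)

lemma lam: "t lam = lam" "lam \<noteq> 0" "w lam = e"
  using uniformizer unfolding is_uniformizer_def by auto

lemma ram_index_least:
  "0 < e" "\<exists>x\<in>K. x \<noteq> 0 \<and> w x = e" "\<And>x. x \<in> K \<Longrightarrow> x \<noteq> 0 \<Longrightarrow> 0 < w x \<Longrightarrow> e \<le> w x"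
proof -
  let ?P = "\<lambda>k. 0 < k \<and> (\<exists>x\<in>K. x \<noteq> 0 \<and> w x = k)"
  define m where "m = (LEAST n. ?P (int n))"
  obtain p where p: "p \<noteq> 0" "w p = 1" using exists_uniformizer by blast
  have "p * t p \<in> K" by (simp add: t_mult mult.commute)
  moreover have "p * t p \<noteq> 0" "w (p * t p) = int 2" using p by (simp_all add: w_mult)
  ultimately have "?P (int 2)" by (auto intro!: bexI[of _ "p * t p"])
  then have m: "?P (int m)" unfolding m_def by (rule LeastI)
  have le: "int m \<le> k" if "?P k" for k
  proof -
    have "?P (int (nat k))" using that by simp
    then have "m \<le> nat k" unfolding m_def by (rule Least_le)
    then show ?thesis using that by (simp add: le_nat_iff)
  qed
  have "e = int m"
    unfolding ram_index_def by (rule Least_equality) (use m le in auto)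
  then show "0 < e" "\<exists>x\<in>K. x \<noteq> 0 \<and> w x = e" using m by auto
  show "e \<le> w x" if "x \<in> K" "x \<noteq> 0" "0 < w x" for x
  proof -
    have "int m \<le> w x" using le[of "w x"] that by blast
    then show ?thesis using \<open>e = int m\<close> by simp
  qed
qed

lemma ram_index_cases: "e = 1 \<or> e = 2"
proof -
  obtain p where p: "p \<noteq> 0" "w p = 1" using exists_uniformizer by blast
  have "p * t p \<in> K" "p * t p \<noteq> 0" "w (p * t p) = 2" using p by (simp_all add: t_mult mult.commute w_mult)
  then show ?thesis using ram_index_least(1) ram_index_least(3)[of "p * t p"] by fastforce
qed

lemma ram_index_dvd_w:
  assumes "x \<in> K" "x \<noteq> 0"
  shows "e dvd w x"
proof -
  define y where "y = x / lam powi (w x div e)"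
  have "y \<in> K" "y \<noteq> 0" using assms lam unfolding y_def by (simp_all add: t_divide t_power_int)
  moreover have "w y = w x mod e"
    unfolding y_def using assms lam by (simp add: w_divide w_power_int minus_div_mult_eq_mod)
  ultimately have "w y = 0"
    using ram_index_least(1) ram_index_least(3)[of y] pos_mod_sign[of e "w x"] pos_mod_bound[of e "w x"]
    by fastforce
  then show ?thesis using \<open>w y = w x mod e\<close> by (simp add: dvd_eq_mod_eq_0)
qed

lemma val_ge_2_if_ramified: "e = 2 \<Longrightarrow> t x = x \<Longrightarrow> V 1 x \<Longrightarrow> V 2 x"
  using ram_index_dvd_w[of x] by (cases "x = 0") (auto simp: val_ge_def elim!: dvdE)

lemma card_residue_field_K: "q = ell ^ inertia_degree ell w K"
proof -
  interpret elementary_abelian_quotient ell "\<O>\<^sub>K" "{x \<in> \<O>\<^sub>K. V 1 x}"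
  proof
    show "0 \<in> \<O>\<^sub>K" by simp
    show "x - y \<in> \<O>\<^sub>K" if "x \<in> \<O>\<^sub>K" "y \<in> \<O>\<^sub>K" for x y using that by (simp add: val_ge_diff t_diff)
    show "x - y \<in> {x \<in> \<O>\<^sub>K. V 1 x}" if "x \<in> {x \<in> \<O>\<^sub>K. V 1 x}" "y \<in> {x \<in> \<O>\<^sub>K. V 1 x}" for x y
      using that by (simp add: val_ge_diff t_diff)
    show "of_nat ell * x \<in> {x \<in> \<O>\<^sub>K. V 1 x}" if "x \<in> \<O>\<^sub>K" for x
      using that val_ge_mult[of 1 "of_nat ell" 0 x] w_ell_pos val_ge_mult[of 0 "of_nat ell" 0 x] val_ge_0_of_nat
      by (simp add: t_mult val_ge_def)
    have "classes \<O>\<^sub>K (\<lambda>x y. x - y \<in> {x \<in> \<O>\<^sub>K. V 1 x}) = classes \<O>\<^sub>K (val_cong 1)"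
      by (rule classes_cong) (simp add: val_ge_diff t_diff)
    then show "finite (classes \<O>\<^sub>K (\<lambda>x y. x - y \<in> {x \<in> \<O>\<^sub>K. V 1 x}))"
      using finite_residue_classes[OF integers_K_subset] by auto
  qed (use prime_ell in auto)
  have "classes \<O>\<^sub>K cong_I = classes \<O>\<^sub>K (val_cong 1)"
    by (rule classes_cong) (simp add: val_ge_diff t_diff)
  then obtain f where f: "q = ell ^ f" using card_classes_prime_power by auto
  have "residue_field w K = classes \<O>\<^sub>K (val_cong 1)"
    unfolding residue_field_eq_classes by (rule arg_cong[where f = "\<lambda>A. classes A _"]) auto
  then have "inertia_degree ell w K = f"
    unfolding inertia_degree_def using f ell_gt_1 by (auto intro!: the_equality dest: power_inject_exp)
  then show ?thesis using f by simp
qed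

lemma mem_C_grp: "x \<in> C_grp w t \<longleftrightarrow> x \<noteq> 0 \<and> w x = 0 \<and> x * t x = 1"
  by (simp add: C_grp_def val_units_def)

lemma C_grp_mult: "x \<in> C_grp w t \<Longrightarrow> y \<in> C_grp w t \<Longrightarrow> x * y \<in> C_grp w t"
  by (auto simp: mem_C_grp w_mult t_mult) (metis mult.assoc mult.left_commute mult_1_right)

lemma C_grp_uminus: "c \<in> C_grp w t \<Longrightarrow> - c \<in> C_grp w t"
  by (simp add: mem_C_grp t_minus)

lemma C_grp_divide: "x \<in> C_grp w t \<Longrightarrow> y \<in> C_grp w t \<Longrightarrow> y / x \<in> C_grp w t"
  by (auto simp: mem_C_grp w_divide t_divide)

lemma C_filt_eq: "C_filt w t lam n = {x \<in> C_grp w t. val_cong (e * int n) x 1}"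
proof -
  have "v_lam w lam (x - 1) \<ge> real n \<longleftrightarrow> e * int n \<le> w (x - 1)" for x
  proof -
    have "v_lam w lam (x - 1) \<ge> real n \<longleftrightarrow> real n * real_of_int e \<le> real_of_int (w (x - 1))"
      unfolding v_lam_def lam(3) using ram_index_least(1) by (simp add: le_divide_eq)
    also have "\<dots> \<longleftrightarrow> e * int n \<le> w (x - 1)"
      by (metis mult.commute of_int_le_iff of_int_mult of_int_of_nat_eq)
    finally show ?thesis .
  qed
  then show ?thesis unfolding C_filt_def by (auto simp: val_ge_def)
qed

lemma C_filt_0: "C_filt w t lam 0 = C_grp w t"
proof -
  have "V 0 (x - 1)" if "x \<in> C_grp w t" for x
    using val_ge_diff[of 0 x 1] that by (simp add: mem_C_grp val_ge_def)
  then show ?thesis unfolding C_filt_eq by auto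
qed

lemma quot_cosets_eq_classes:
  "quot_cosets (C_filt w t lam n) (C_filt w t lam (Suc n))
     = classes (C_filt w t lam n) (val_cong (e * int (Suc n)))"
proof -
  have "(\<lambda>h. x * h) ` C_filt w t lam (Suc n) = {y \<in> C_filt w t lam n. val_cong (e * int (Suc n)) x y}"
    if x: "x \<in> C_filt w t lam n" for x
  proof (intro set_eqI iffI)
    have xC: "x \<in> C_grp w t" "x \<noteq> 0" "w x = 0" and x1: "val_cong (e * int n) x 1"
      using x by (auto simp: C_filt_eq mem_C_grp)
    have mono: "e * int n \<le> e * int (Suc n)" using ram_index_least(1) by simp
    fix y
    assume "y \<in> (\<lambda>h. x * h) ` C_filt w t lam (Suc n)"
    then obtain h where h: "h \<in> C_grp w t" "val_cong (e * int (Suc n)) h 1" "y = x * h"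
      by (auto simp: C_filt_eq)
    have hV: "V (e * int (Suc n)) (x * (h - 1))" using h(2) xC(2,3) by (simp add: val_ge_mult_unit)
    have eq: "y - 1 = x * (h - 1) + (x - 1)" using h(3) by (simp add: algebra_simps)
    have "val_cong (e * int n) y 1" unfolding eq by (rule val_ge_add[OF val_ge_mono[OF hV mono] x1])
    moreover have "x - y = - (x * (h - 1))" using h(3) by (simp add: algebra_simps)
    then have "val_cong (e * int (Suc n)) x y" using hV by simp
    ultimately show "y \<in> {y \<in> C_filt w t lam n. val_cong (e * int (Suc n)) x y}"
      using C_grp_mult[OF xC(1) h(1)] h(3) by (simp add: C_filt_eq)
  next
    have xC: "x \<in> C_grp w t" "x \<noteq> 0" "w x = 0" using x by (auto simp: C_filt_eq mem_C_grp)
    fix y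
    assume "y \<in> {y \<in> C_filt w t lam n. val_cong (e * int (Suc n)) x y}"
    then have y: "y \<in> C_grp w t" "val_cong (e * int (Suc n)) x y" by (auto simp: C_filt_eq)
    have "y / x - 1 = - ((x - y) / x)" using xC by (simp add: field_simps)
    then have "y / x \<in> C_filt w t lam (Suc n)"
      using C_grp_divide[OF xC(1) y(1)] y(2) xC by (simp add: C_filt_eq val_ge_divide_unit)
    moreover have "y = x * (y / x)" using xC by simp
    ultimately show "y \<in> (\<lambda>h. x * h) ` C_filt w t lam (Suc n)" by blast
  qed
  then show ?thesis unfolding quot_cosets_def classes_eq_image by (rule image_cong[OF refl])
qed

lemma w_2_if_odd: "ell \<noteq> 2 \<Longrightarrow> w 2 = 0"
  using w_of_nat_eq_0[of 2] dvd_imp_le[of ell 2] prime_ge_2_nat[OF prime_ell] by auto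

lemma val_ge_1_2_if_even: "ell = 2 \<Longrightarrow> V 1 2"
  using w_ell_pos by (simp add: val_ge_def)

lemma val_ge_0_times: "V 0 x \<Longrightarrow> V 0 y \<Longrightarrow> V 0 (x * y)"
  using val_ge_mult[of 0 x 0 y] by simp

text \<open>In the ramified case \<open>\<tau>\<close> acts trivially on the residue field: the trace \<open>z + \<tau> z\<close> of
  \<open>z = c p\<close> lies in \<open>K\<close>, so has even valuation, and dividing by \<open>p\<close> shows
  \<open>c + \<tau>(c) \<tau>(p)/p \<equiv> 0\<close>; taking \<open>c = 1\<close> gives \<open>\<tau>(p)/p \<equiv> -1\<close>.\<close>

lemma ramified_trace_cong:
  assumes "e = 2" "p \<noteq> 0" "w p = 1" "V 0 c"
  shows "V 1 (c + t c * (t p / p))"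
proof -
  have "V 0 (c + t c * (t p / p))"
    using val_ge_add[OF assms(4) val_ge_0_times[of "t c" "t p / p"]] assms(2,3,4)
    by (simp add: val_ge_def w_divide)
  moreover have eq: "c * p + t (c * p) = (c + t c * (t p / p)) * p"
    using assms(2) by (simp add: t_mult algebra_simps)
  ultimately have "V 1 (c * p + t (c * p))"
    using val_ge_mult[of 0 _ 1 p] assms(2,3) by (simp add: val_ge_def)
  then have "V 2 (c * p + t (c * p))"
    using val_ge_2_if_ramified[OF assms(1)] by (simp add: t_add add.commute)
  then show ?thesis unfolding eq using assms(2,3) by (simp add: val_ge_mult_iff mult.commute)
qed

lemma ramified_residue_trivial:
  assumes "e = 2" "V 0 c"
  shows "V 1 (c - t c)"
proof -
  obtain p where p: "p \<noteq> 0" "w p = 1" using exists_uniformizer by blast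
  have one: "V 1 (1 + t p / p)" using ramified_trace_cong[OF assms(1) p, of 1] by simp
  have eq: "c - t c = (c + t c * (t p / p)) - t c * (1 + t p / p)" by (simp add: algebra_simps)
  have "V 1 (t c * (1 + t p / p))" using val_ge_mult[of 0 "t c" 1] assms(2) one by simp
  then show ?thesis unfolding eq by (rule val_ge_diff[OF ramified_trace_cong[OF assms(1) p assms(2)]])
qed

lemma average_in_integers_K:
  assumes "ell \<noteq> 2" "V 0 x" "V 1 (x - t x)"
  shows "(x + t x) / 2 \<in> \<O>\<^sub>K" "V 1 (x - (x + t x) / 2)"
proof -
  have w2: "w 2 = 0" using w_2_if_odd assms(1) .
  show "(x + t x) / 2 \<in> \<O>\<^sub>K"
    using val_ge_add[of 0 x "t x"] assms(2) w2 by (simp add: val_ge_divide_unit t_divide t_add add.commute)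
  have eq: "x - (x + t x) / 2 = (x - t x) / 2" by (simp add: field_simps)
  show "V 1 (x - (x + t x) / 2)" unfolding eq using assms(3) w2 by (simp add: val_ge_divide_unit)
qed

text \<open>If \<open>\<tau>\<close> acted trivially on the residue field, successive approximation (with \<open>\<lambda>\<close> a
  uniformizer of \<open>L\<close> lying in \<open>K\<close>) would show that every integer of \<open>L\<close> is a limit of elements of
  \<open>K\<close>, hence fixed by \<open>\<tau>\<close>.\<close>

lemma approximation_by_K:
  assumes "e = 1" and residue: "\<And>y. V 0 y \<Longrightarrow> \<exists>k\<in>K. V 1 (y - k)" and "V 0 x"
  shows "\<exists>k\<in>K. V (int N) (x - k)"
proof (induction N)
  case 0
  then show ?case using assms(3) by (intro bexI[of _ 0]) auto
next
  case (Suc N)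
  then obtain k where k: "k \<in> K" "V (int N) (x - k)" by blast
  have lN: "lam ^ N \<noteq> 0" "w (lam ^ N) = int N" using lam assms(1) by (simp_all add: w_power)
  have "V 0 ((x - k) / lam ^ N)" using k(2) lN by (simp add: val_ge_divide_iff)
  then obtain k' where k': "k' \<in> K" "V 1 ((x - k) / lam ^ N - k')" using residue by blast
  have "x - (k + lam ^ N * k') = lam ^ N * ((x - k) / lam ^ N - k')"
    using lN(1) by (simp add: field_simps)
  moreover have "V (int (Suc N)) (lam ^ N * ((x - k) / lam ^ N - k'))"
    using k'(2) lN by (simp add: val_ge_mult_iff)
  ultimately have "V (int (Suc N)) (x - (k + lam ^ N * k'))" by simp
  moreover have "k + lam ^ N * k' \<in> K" using k(1) k'(1) lam(1) by (simp add: t_add t_mult t_power)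
  ultimately show ?case by blast
qed

lemma t_eq_id_if_residue_fields_eq:
  assumes "e = 1" and residue: "\<And>y. V 0 y \<Longrightarrow> \<exists>k\<in>K. V 1 (y - k)"
  shows "t = id"
proof -
  have fixed: "t x = x" if x: "V 0 x" for x
  proof -
    have all_N: "V (int N) (t x - x)" for N
    proof -
      obtain k where k: "k \<in> K" "V (int N) (x - k)"
        using approximation_by_K[OF assms(1) _ x] residue by blast
      have eq: "t x - x = t (x - k) - (x - k)" using k(1) by (simp add: t_diff)
      have "V (int N) (t (x - k))" using k(2) by simp
      then show ?thesis unfolding eq using k(2) by (rule val_ge_diff)
    qed
    have "V k (t x - x)" for k using val_ge_mono[OF all_N[of "nat k"], of k] by simp
    then have "t x - x = 0" by (rule val_ge_all_imp_zero)
    then show ?thesis by simp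
  qed
  have "t x = x" for x
  proof (cases "V 0 x")
    case False
    then have "V 0 (inverse x)" by (auto simp: val_ge_def w_inverse)
    then show ?thesis using fixed[of "inverse x"] by (simp add: t_inverse)
  qed (rule fixed)
  then show ?thesis by auto
qed

lemma unramified_residue_nontrivial:
  assumes "e = 1" "ell \<noteq> 2"
  shows "\<exists>\<theta>. V 0 \<theta> \<and> \<not> V 1 (\<theta> - t \<theta>)"
proof (rule ccontr)
  assume trivial: "\<nexists>\<theta>. V 0 \<theta> \<and> \<not> V 1 (\<theta> - t \<theta>)"
  have "\<exists>k\<in>K. V 1 (y - k)" if y: "V 0 y" for y
  proof -
    have "V 1 (y - t y)" using trivial y by blast
    note avg = average_in_integers_K[OF assms(2) y this]
    show ?thesis using avg by (intro bexI[of _ "(y + t y) / 2"]) auto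
  qed
  then show False using t_eq_id_if_residue_fields_eq[OF assms(1)] nontrivial by blast
qed

text \<open>Unramified case: with \<open>\<tau> \<theta> = -\<theta>\<close> a unit, the Cayley transform \<open>a \<mapsto> (a + \<theta>)/(a - \<theta>)\<close>
  maps \<open>\<O>\<^sub>K\<close> onto the norm-one units that are not \<open>\<equiv> 1\<close>, and it is injective modulo
  the maximal ideal; this is the parametrization of the conic \<open>x\<^sup>2 - \<theta>\<^sup>2 y\<^sup>2 = 1\<close> by lines.\<close>

context
  fixes \<theta> :: 'a
  assumes \<theta>: "\<theta> \<noteq> 0" "w \<theta> = 0" "t \<theta> = - \<theta>" and odd: "ell \<noteq> 2"
begin

definition cayley :: "'a \<Rightarrow> 'a" where
  "cayley a = (a + \<theta>) / (a - \<theta>)"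

lemma cayley_denominators:
  assumes a: "a \<in> \<O>\<^sub>K"
  shows "a - \<theta> \<noteq> 0" "w (a - \<theta>) = 0" "a + \<theta> \<noteq> 0" "w (a + \<theta>) = 0"
proof -
  have not_both: "\<not> (V 1 (a - \<theta>) \<and> V 1 (a + \<theta>))"
  proof
    assume "V 1 (a - \<theta>) \<and> V 1 (a + \<theta>)"
    then have "V 1 ((a + \<theta>) - (a - \<theta>))" using val_ge_diff by blast
    then show False using \<theta> w_2_if_odd[OF odd] by (simp add: val_ge_def w_mult)
  qed
  have "V 1 (a - \<theta>) \<longleftrightarrow> V 1 (a + \<theta>)"
    using val_ge_t_iff[of 1 "a - \<theta>"] a \<theta>(3) by (simp add: t_diff)
  then have "\<not> V 1 (a - \<theta>)" "\<not> V 1 (a + \<theta>)" using not_both by blast+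
  moreover have "V 0 (a - \<theta>)" "V 0 (a + \<theta>)"
    using a \<theta>(2) val_ge_diff[of 0 a \<theta>] val_ge_add[of 0 a \<theta>] by (simp_all add: val_ge_def)
  ultimately show "a - \<theta> \<noteq> 0" "w (a - \<theta>) = 0" "a + \<theta> \<noteq> 0" "w (a + \<theta>) = 0"
    by (auto simp: val_ge_def)
qed

lemma cayley_in_C_grp: "a \<in> \<O>\<^sub>K \<Longrightarrow> cayley a \<in> C_grp w t"
  using cayley_denominators[of a] \<theta>(3)
  by (simp add: mem_C_grp cayley_def w_divide t_divide t_add t_diff)

lemma cayley_not_cong_1: "a \<in> \<O>\<^sub>K \<Longrightarrow> \<not> val_cong 1 (cayley a) 1"
proof -
  assume a: "a \<in> \<O>\<^sub>K"
  have "cayley a - 1 = (2 * \<theta>) / (a - \<theta>)"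
    unfolding cayley_def using cayley_denominators[OF a] by (simp add: field_simps)
  then show ?thesis
    using cayley_denominators[OF a] \<theta> w_2_if_odd[OF odd] by (simp add: val_ge_def w_divide w_mult)
qed

lemma cayley_cong_iff:
  assumes a: "a \<in> \<O>\<^sub>K" and b: "b \<in> \<O>\<^sub>K"
  shows "val_cong 1 (cayley a) (cayley b) \<longleftrightarrow> val_cong 1 a b"
proof -
  have "cayley a - cayley b = ((2 * \<theta>) * (b - a)) / ((a - \<theta>) * (b - \<theta>))"
    unfolding cayley_def using cayley_denominators[OF a] cayley_denominators[OF b]
    by (simp add: field_simps)
  then show ?thesis
    using cayley_denominators[OF a] cayley_denominators[OF b] \<theta> w_2_if_odd[OF odd]
    by (simp add: val_ge_divide_unit val_ge_mult_unit w_mult val_ge_diff_commute[of 1 b])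
qed

lemma cayley_onto:
  assumes y: "y \<in> C_grp w t" "\<not> val_cong 1 y 1"
  shows "\<exists>a\<in>\<O>\<^sub>K. cayley a = y"
proof -
  have y0: "y \<noteq> 0" "w y = 0" "t y = 1 / y" using y(1) by (auto simp: mem_C_grp field_simps)
  have y1: "y - 1 \<noteq> 0" "w (y - 1) = 0"
    using y(2) val_ge_diff[of 0 y 1] y0 by (auto simp: val_ge_def)
  define a where "a = \<theta> * (y + 1) / (y - 1)"
  have "V 0 (y + 1)" using val_ge_add[of 0 y 1] y0 by (simp add: val_ge_def)
  then have "V 0 a" unfolding a_def using y1 \<theta> by (simp add: val_ge_divide_unit val_ge_mult_unit)
  moreover have "t a = a"
  proof -
    have "t a = - \<theta> * (1 / y + 1) / (1 / y - 1)"
      unfolding a_def using \<theta>(3) y0(3) by (simp add: t_divide t_mult t_add t_diff)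
    also have "\<dots> = a" unfolding a_def using y0(1) y1(1) by (simp add: field_simps)
    finally show ?thesis .
  qed
  moreover have "cayley a = y" unfolding cayley_def a_def using y0(1) y1(1) \<theta>(1) by (simp add: field_simps)
  ultimately show ?thesis by blast
qed

end

lemma card_C_mod_1_unramified:
  assumes odd: "ell \<noteq> 2" and "e = 1"
  shows "card (classes (C_grp w t) (val_cong 1)) = q + 1"
proof -
  obtain \<theta>\<^sub>0 where "V 0 \<theta>\<^sub>0" "\<not> V 1 (\<theta>\<^sub>0 - t \<theta>\<^sub>0)" using unramified_residue_nontrivial[OF assms(2) odd] by blast
  then have \<theta>: "\<theta>\<^sub>0 - t \<theta>\<^sub>0 \<noteq> 0" "w (\<theta>\<^sub>0 - t \<theta>\<^sub>0) = 0" "t (\<theta>\<^sub>0 - t \<theta>\<^sub>0) = - (\<theta>\<^sub>0 - t \<theta>\<^sub>0)"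
    using val_ge_diff[of 0 \<theta>\<^sub>0 "t \<theta>\<^sub>0"] by (auto simp: val_ge_def t_diff)
  let ?C = "C_grp w t" and ?C1 = "{c \<in> C_grp w t. val_cong 1 c 1}"
  have "card (classes ?C (val_cong 1)) = card (classes ?C1 (val_cong 1)) + card (classes (?C - ?C1) (val_cong 1))"
  proof (rule card_classes_Un_saturated[OF equivp_val_cong])
    show "y \<in> ?C1" if "x \<in> ?C1" "y \<in> ?C" "val_cong 1 x y" for x y
      using that val_ge_diff[of 1 "x - 1" "x - y"] by simp
    have "?C \<subseteq> \<O>" by (auto simp: mem_C_grp val_ge_def)
    then show "finite (classes ?C1 (val_cong 1))" "finite (classes (?C - ?C1) (val_cong 1))"
      by (auto intro: finite_residue_classes)
  qed auto
  moreover have "card (classes ?C1 (val_cong 1)) = 1"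
    by (rule card_classes_eq_1[OF equivp_val_cong, of 1]) (auto simp: mem_C_grp val_ge_diff_commute)
  moreover have "card (classes (?C - ?C1) (val_cong 1)) = q"
  proof (rule card_classes_eq_if_bij[OF equivp_val_cong equivp_val_cong])
    show "cayley (\<theta>\<^sub>0 - t \<theta>\<^sub>0) ` \<O>\<^sub>K \<subseteq> ?C - ?C1"
      using cayley_in_C_grp[OF \<theta> odd] cayley_not_cong_1[OF \<theta> odd] by blast
    show "val_cong 1 (cayley (\<theta>\<^sub>0 - t \<theta>\<^sub>0) a) (cayley (\<theta>\<^sub>0 - t \<theta>\<^sub>0) b) \<longleftrightarrow> val_cong 1 a b"
      if "a \<in> \<O>\<^sub>K" "b \<in> \<O>\<^sub>K" for a b
      using cayley_cong_iff[OF \<theta> odd that] .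
    show "\<exists>a\<in>\<O>\<^sub>K. val_cong 1 y (cayley (\<theta>\<^sub>0 - t \<theta>\<^sub>0) a)" if "y \<in> ?C - ?C1" for y
      using cayley_onto[OF \<theta> odd, of y] that by force
  qed
  ultimately show ?thesis by simp
qed

lemma exists_antiinvariant_uniformizer:
  assumes "ell \<noteq> 2" "e = 2"
  shows "\<exists>\<pi>. \<pi> \<noteq> 0 \<and> w \<pi> = 1 \<and> t \<pi> = - \<pi>"
proof -
  obtain p where p: "p \<noteq> 0" "w p = 1" using exists_uniformizer by blast
  have "V 1 (1 + t p / p)" using ramified_trace_cong[OF assms(2) p, of 1] by simp
  then have "V 1 (- (1 + t p / p))" by (simp only: val_ge_minus)
  moreover have "(2::'a) \<noteq> 0" "w 2 < 1" using w_2_if_odd[OF assms(1)] by simp_all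
  ultimately have "2 + - (1 + t p / p) \<noteq> 0" "w (2 + - (1 + t p / p)) = w 2"
    using w_add_eq_if_less by blast+
  then have u: "2 + - (1 + t p / p) \<noteq> 0" "w (2 + - (1 + t p / p)) = 0"
    using w_2_if_odd[OF assms(1)] by simp_all
  have eq: "p - t p = p * (2 + - (1 + t p / p))" using p by (simp add: field_simps)
  have "p - t p \<noteq> 0" "w (p - t p) = 1" unfolding eq using p u by (simp_all add: w_mult)
  moreover have "t (p - t p) = - (p - t p)" by (simp add: t_diff)
  ultimately show ?thesis by blast
qed

lemma C_grp_cong_1_or_minus_1:
  assumes "e = 2" "c \<in> C_grp w t"
  shows "val_cong 1 c 1 \<or> val_cong 1 c (- 1)"
proof (rule ccontr)
  assume "\<not> (val_cong 1 c 1 \<or> val_cong 1 c (- 1))"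
  moreover have "V 0 c" using assms(2) by (simp add: mem_C_grp val_ge_def)
  ultimately have "c - 1 \<noteq> 0" "w (c - 1) = 0" "c + 1 \<noteq> 0" "w (c + 1) = 0"
    using val_ge_diff[of 0 c 1] val_ge_add[of 0 c 1] by (auto simp: val_ge_def)
  then have "(c - 1) * (c + 1) \<noteq> 0" "w ((c - 1) * (c + 1)) = 0" by (simp_all add: w_mult)
  moreover have "(c - 1) * (c + 1) = c * (c - t c)"
    using assms(2) by (simp add: mem_C_grp algebra_simps)
  moreover have "V 1 (c * (c - t c))"
    using val_ge_mult[OF \<open>V 0 c\<close> ramified_residue_trivial[OF assms(1) \<open>V 0 c\<close>]] by simp
  ultimately show False by (simp add: val_ge_nonzero)
qed

text \<open>Ramified case: with \<open>\<tau> \<pi> = -\<pi>\<close> a uniformizer, \<open>a \<mapsto> (1 + a\<pi>)/(1 - a\<pi>)\<close> identifies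
  \<open>\<O>\<^sub>K\<close> modulo the maximal ideal with the norm-one units \<open>\<equiv> 1\<close> modulo its square.\<close>

context
  fixes \<pi> :: 'a
  assumes \<pi>: "\<pi> \<noteq> 0" "w \<pi> = 1" "t \<pi> = - \<pi>" and odd: "ell \<noteq> 2"
begin

definition cayley_ramified :: "'a \<Rightarrow> 'a" where
  "cayley_ramified a = (1 + a * \<pi>) / (1 - a * \<pi>)"

lemma cayley_ramified_denominators:
  assumes "V 0 a"
  shows "1 - a * \<pi> \<noteq> 0" "w (1 - a * \<pi>) = 0" "1 + a * \<pi> \<noteq> 0" "w (1 + a * \<pi>) = 0"
proof -
  have "V 1 (a * \<pi>)" using val_ge_mult[of 0 a 1 \<pi>] assms \<pi> by (simp add: val_ge_def)
  then show "1 - a * \<pi> \<noteq> 0" "w (1 - a * \<pi>) = 0" "1 + a * \<pi> \<noteq> 0" "w (1 + a * \<pi>) = 0"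
    using w_add_eq_if_less[of 1 1 "- (a * \<pi>)"] w_add_eq_if_less[of 1 1 "a * \<pi>"] by simp_all
qed

lemma cayley_ramified_in_C_grp: "a \<in> \<O>\<^sub>K \<Longrightarrow> cayley_ramified a \<in> C_grp w t"
  using cayley_ramified_denominators[of a] \<pi>(3)
  by (simp add: mem_C_grp cayley_ramified_def w_divide t_divide t_add t_diff t_mult)

lemma cayley_ramified_cong_1: "a \<in> \<O>\<^sub>K \<Longrightarrow> val_cong 1 (cayley_ramified a) 1"
proof -
  assume a: "a \<in> \<O>\<^sub>K"
  have "cayley_ramified a - 1 = (2 * a * \<pi>) / (1 - a * \<pi>)"
    unfolding cayley_ramified_def using cayley_ramified_denominators[of a] a by (simp add: field_simps)
  moreover have "V (0 + 1) (2 * a * \<pi>)"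
    using val_ge_mult[of 0 "2 * a" 1 \<pi>] val_ge_mult[of 0 2 0 a] a \<pi> w_2_if_odd[OF odd]
    by (simp add: val_ge_def)
  ultimately show ?thesis using cayley_ramified_denominators[of a] a by (simp add: val_ge_divide_unit)
qed

lemma cayley_ramified_cong_iff:
  assumes a: "a \<in> \<O>\<^sub>K" and b: "b \<in> \<O>\<^sub>K"
  shows "val_cong 2 (cayley_ramified a) (cayley_ramified b) \<longleftrightarrow> val_cong 1 a b"
proof -
  have "cayley_ramified a - cayley_ramified b = (2 * \<pi>) * (a - b) / ((1 - a * \<pi>) * (1 - b * \<pi>))"
    unfolding cayley_ramified_def
    using cayley_ramified_denominators[of a] cayley_ramified_denominators[of b] a b
    by (simp add: field_simps)
  then show ?thesis
    using cayley_ramified_denominators[of a] cayley_ramified_denominators[of b] a b \<pi> w_2_if_odd[OF odd]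
    by (simp add: val_ge_divide_unit val_ge_mult_iff w_mult)
qed

lemma cayley_ramified_onto:
  assumes "e = 2" and y: "y \<in> C_grp w t" "val_cong 1 y 1"
  shows "\<exists>a\<in>\<O>\<^sub>K. val_cong 2 y (cayley_ramified a)"
proof -
  have wpi2: "2 * \<pi> \<noteq> 0" "w (2 * \<pi>) = 1" using w_2_if_odd[OF odd] \<pi> by (simp_all add: w_mult)
  define b where "b = (y - 1) / (2 * \<pi>)"
  have b: "V 0 b" unfolding b_def using y(2) wpi2 by (simp add: val_ge_divide_iff)
  define a where "a = (b + t b) / 2"
  have a: "a \<in> \<O>\<^sub>K" "V 1 (b - a)"
    unfolding a_def using average_in_integers_K[OF odd b ramified_residue_trivial[OF assms(1) b]] by auto
  have "y - cayley_ramified a = (2 * \<pi>) * ((b - a) - a * b * \<pi>) / (1 - a * \<pi>)"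
    unfolding cayley_ramified_def b_def using cayley_ramified_denominators[of a] a wpi2
    by (simp add: field_simps)
  moreover have "V 1 ((b - a) - a * b * \<pi>)"
  proof -
    have "V 0 (a * b)" using val_ge_0_times a(1) b by simp
    moreover have "V 1 \<pi>" using \<pi> by (simp add: val_ge_def)
    ultimately have "V (0 + 1) (a * b * \<pi>)" by (rule val_ge_mult)
    then show ?thesis using val_ge_diff[OF a(2)] by simp
  qed
  ultimately have "val_cong 2 y (cayley_ramified a)"
    using cayley_ramified_denominators[of a] a wpi2 by (simp add: val_ge_divide_unit val_ge_mult_iff)
  then show ?thesis using a(1) by blast
qed

end

lemma C_grp_not_cong_1_eq_uminus:
  assumes odd: "ell \<noteq> 2" and "e = 2"
  shows "C_grp w t - {c \<in> C_grp w t. val_cong 1 c 1} = uminus ` {c \<in> C_grp w t. val_cong 1 c 1}"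
    (is "?C - ?Cp = _")
proof
  show "?C - ?Cp \<subseteq> uminus ` ?Cp"
  proof
    fix c assume c: "c \<in> ?C - ?Cp"
    then have "V 1 (c + 1)" using C_grp_cong_1_or_minus_1[OF assms(2)] by auto
    moreover have "- c - 1 = - (c + 1)" by simp
    ultimately have "V 1 (- c - 1)" by (simp only: val_ge_minus)
    then have "- c \<in> ?Cp" using C_grp_uminus c by auto
    then show "c \<in> uminus ` ?Cp" by (rule image_eqI[rotated]) simp
  qed
  show "uminus ` ?Cp \<subseteq> ?C - ?Cp"
  proof
    fix c assume "c \<in> uminus ` ?Cp"
    then obtain d where d: "d \<in> ?Cp" "c = - d" by blast
    moreover have "c + 1 = - (d - 1)" using d(2) by simp
    ultimately have "V 1 ((c + 1) - (c - 1))" if "val_cong 1 c 1"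
      using val_ge_diff[of 1 "c + 1" "c - 1"] that by (simp only: val_ge_minus mem_Collect_eq)
    then have "\<not> val_cong 1 c 1" using w_2_if_odd[OF odd] by (auto simp: val_ge_def)
    then show "c \<in> ?C - ?Cp" using d C_grp_uminus by auto
  qed
qed

lemma card_C_cong_1_mod_2:
  assumes odd: "ell \<noteq> 2" and "e = 2"
  shows "finite (classes {c \<in> C_grp w t. val_cong 1 c 1} (val_cong 2))"
    and "card (classes {c \<in> C_grp w t. val_cong 1 c 1} (val_cong 2)) = q"
proof -
  obtain \<pi> where \<pi>: "\<pi> \<noteq> 0" "w \<pi> = 1" "t \<pi> = - \<pi>"
    using exists_antiinvariant_uniformizer[OF assms] by blast
  have bij: "cayley_ramified \<pi> ` \<O>\<^sub>K \<subseteq> {c \<in> C_grp w t. val_cong 1 c 1}"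
    "\<And>a b. a \<in> \<O>\<^sub>K \<Longrightarrow> b \<in> \<O>\<^sub>K \<Longrightarrow>
      val_cong 2 (cayley_ramified \<pi> a) (cayley_ramified \<pi> b) \<longleftrightarrow> val_cong 1 a b"
    "\<And>y. y \<in> {c \<in> C_grp w t. val_cong 1 c 1} \<Longrightarrow> \<exists>a\<in>\<O>\<^sub>K. val_cong 2 y (cayley_ramified \<pi> a)"
    using cayley_ramified_in_C_grp[OF \<pi> odd] cayley_ramified_cong_1[OF \<pi> odd]
      cayley_ramified_cong_iff[OF \<pi> odd] cayley_ramified_onto[OF \<pi> odd assms(2)] by auto
  show "finite (classes {c \<in> C_grp w t. val_cong 1 c 1} (val_cong 2))"
    using finite_classes_iff_bij[OF equivp_val_cong equivp_val_cong bij]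
      finite_residue_classes[OF integers_K_subset] by auto
  show "card (classes {c \<in> C_grp w t. val_cong 1 c 1} (val_cong 2)) = q"
    by (rule card_classes_eq_if_bij[OF equivp_val_cong equivp_val_cong bij])
qed

lemma card_C_mod_2_ramified:
  assumes odd: "ell \<noteq> 2" and "e = 2"
  shows "card (classes (C_grp w t) (val_cong 2)) = 2 * q"
proof -
  let ?C = "C_grp w t" and ?Cp = "{c \<in> C_grp w t. val_cong 1 c 1}"
  note Cp = card_C_cong_1_mod_2[OF assms]
  have neg: "uminus ` ?Cp \<subseteq> uminus ` ?Cp"
    "\<And>x y. x \<in> ?Cp \<Longrightarrow> y \<in> ?Cp \<Longrightarrow> val_cong 2 (- x) (- y) \<longleftrightarrow> val_cong 2 x y"
    "\<And>y. y \<in> uminus ` ?Cp \<Longrightarrow> \<exists>x\<in>?Cp. val_cong 2 y (- x)"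
    by (auto simp: val_ge_diff_commute[of 2 _ "- _"]) (use val_ge_diff_commute in blast)+
  have "card (classes (?C - ?Cp) (val_cong 2)) = q" "finite (classes (?C - ?Cp) (val_cong 2))"
    unfolding C_grp_not_cong_1_eq_uminus[OF assms]
    using card_classes_eq_if_bij[OF equivp_val_cong equivp_val_cong neg]
      finite_classes_iff_bij[OF equivp_val_cong equivp_val_cong neg] Cp by simp_all
  moreover have "card (classes ?C (val_cong 2)) = card (classes ?Cp (val_cong 2)) + card (classes (?C - ?Cp) (val_cong 2))"
  proof (rule card_classes_Un_saturated[OF equivp_val_cong])
    show "y \<in> ?Cp" if "x \<in> ?Cp" "y \<in> ?C" "val_cong 2 x y" for x y
      using that val_ge_diff[of 1 "x - 1" "x - y"] val_ge_mono[of 2 "x - y" 1] by simp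
  qed (use Cp calculation in auto)
  ultimately show ?thesis using Cp(2) by simp
qed

lemma card_residue_field_le_sq_if_nontrivial:
  assumes \<theta>: "V 0 \<theta>" "\<not> V 1 (\<theta> - t \<theta>)"
  shows "card (classes \<O> (val_cong 1)) \<le> q ^ 2"
proof -
  define d where "d = \<theta> - t \<theta>"
  have d: "d \<noteq> 0" "w d = 0" "t d = - d"
    unfolding d_def using \<theta> val_ge_diff[of 0 \<theta> "t \<theta>"] by (auto simp: val_ge_def t_diff)
  define f where "f z = fst z + snd z * \<theta>" for z
  have "card (classes \<O> (val_cong 1)) \<le> card (classes (\<O>\<^sub>K \<times> \<O>\<^sub>K) (rel_prod (val_cong 1) (val_cong 1)))"
  proof (rule card_classes_le_if_surj[OF equivp_rel_prod[OF equivp_val_cong] equivp_val_cong])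
    show "f ` (\<O>\<^sub>K \<times> \<O>\<^sub>K) \<subseteq> \<O>"
      using \<theta>(1) val_ge_add val_ge_0_times by (auto simp: f_def)
    show "val_cong 1 (f z) (f z')"
      if "rel_prod (val_cong 1) (val_cong 1) z z'" for z z'
    proof -
      have "f z - f z' = (fst z - fst z') + (snd z - snd z') * \<theta>" by (simp add: f_def algebra_simps)
      then show ?thesis
        using that val_ge_mult[of 1 "snd z - snd z'" 0 \<theta>] \<theta>(1) val_ge_add
        by (auto simp: rel_prod_sel)
    qed
    show "\<exists>z\<in>\<O>\<^sub>K \<times> \<O>\<^sub>K. val_cong 1 y (f z)" if y: "y \<in> \<O>" for y
    proof -
      define b where "b = (y - t y) / d"
      define a where "a = y - b * \<theta>"
      have b: "V 0 b" "t b = b" unfolding b_def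
        using y d val_ge_diff[of 0 y "t y"] by (simp_all add: val_ge_divide_unit t_divide t_diff minus_divide_left)
      moreover have "t a = a"
      proof -
        have "t a = t y - b * t \<theta>" unfolding a_def using b(2) by (simp add: t_diff t_mult)
        also have "\<dots> = a - (y - t y - b * d)" unfolding a_def d_def by (simp add: algebra_simps)
        also have "y - t y - b * d = 0" unfolding b_def using d by simp
        finally show ?thesis by simp
      qed
      moreover have "V 0 a" unfolding a_def using y b(1) \<theta>(1) val_ge_diff val_ge_0_times by auto
      moreover have "y = f (a, b)" by (simp add: f_def a_def)
      ultimately show ?thesis by (intro bexI[of _ "(a, b)"]) auto
    qed
  qed (use card_classes_Times[OF equivp_val_cong finite_residue_classes[OF integers_K_subset]] in auto)
  then show ?thesis using card_classes_Times[OF equivp_val_cong finite_residue_classes[OF integers_K_subset]] by auto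
qed

text \<open>In residue characteristic 2, if \<open>\<tau>\<close> acts trivially on the residue field then the norm
  \<open>x \<tau>(x) \<equiv> x\<^sup>2\<close> reduces to the Frobenius, which is injective.\<close>

lemma card_residue_field_le_if_trivial:
  assumes "ell = 2" and trivial: "\<And>x. V 0 x \<Longrightarrow> V 1 (x - t x)"
  shows "card (classes \<O> (val_cong 1)) \<le> q"
proof (rule card_classes_le_if_inj[OF equivp_val_cong equivp_val_cong])
  show "(\<lambda>x. x * t x) ` \<O> \<subseteq> \<O>\<^sub>K" using val_ge_0_times by (auto simp: t_mult mult.commute)
  show "val_cong 1 x y" if "x \<in> \<O>" "y \<in> \<O>" "val_cong 1 (x * t x) (y * t y)" for x y
  proof -
    have sq: "V 1 (z * t z - z * z)" if "V 0 z" for z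
    proof -
      have "z * t z - z * z = - (z * (z - t z))" by (simp add: algebra_simps)
      then show ?thesis using val_ge_mult[OF that trivial[OF that]] by simp
    qed
    have eq: "x * x - y * y = (x * t x - y * t y) - (x * t x - x * x) + (y * t y - y * y)" by simp
    have "V 1 (x * x - y * y)"
      unfolding eq by (rule val_ge_add[OF val_ge_diff[OF that(3) sq] sq]) (use that in simp_all)
    moreover have "V 1 (2 * y * (x - y))"
      using val_ge_mult[OF val_ge_mult[OF val_ge_1_2_if_even[OF assms(1)], of 0 y] val_ge_diff[of 0 x y]]
        that(1,2) by simp
    moreover have "(x - y) * (x - y) = (x * x - y * y) - 2 * y * (x - y)" by (simp add: algebra_simps)
    ultimately have "V 1 ((x - y) * (x - y))" using val_ge_diff by metis
    then show ?thesis by (cases "x = y") (auto simp: val_ge_def w_mult)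
  qed
qed (auto intro: finite_residue_classes)

lemma card_residue_field_le_sq_if_even:
  assumes "ell = 2"
  shows "card (classes \<O> (val_cong 1)) \<le> q ^ 2"
proof (cases "\<exists>\<theta>. V 0 \<theta> \<and> \<not> V 1 (\<theta> - t \<theta>)")
  case False
  then have "card (classes \<O> (val_cong 1)) \<le> q" using card_residue_field_le_if_trivial[OF assms] by blast
  also have "\<dots> \<le> q ^ 2" by (simp add: power2_eq_square)
  finally show ?thesis .
qed (use card_residue_field_le_sq_if_nontrivial in blast)

lemma card_integers_mod_2_le_sq_if_even:
  assumes "ell = 2" "e = 2"
  shows "finite (classes \<O> (val_cong 2))" "card (classes \<O> (val_cong 2)) \<le> q ^ 2"
proof -
  obtain p where p: "p \<noteq> 0" "w p = 1" using exists_uniformizer by blast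
  have lift: "\<exists>a\<in>\<O>\<^sub>K. val_cong 1 y a" if "V 0 y" for y
    using classes_meet_subset[OF equivp_val_cong _ finite_residue_classes[OF subset_refl]
        card_residue_field_le_if_trivial[OF assms(1) ramified_residue_trivial[OF assms(2)]], of y]
      that by auto
  define f where "f z = fst z + snd z * p" for z
  have surj: "f ` (\<O>\<^sub>K \<times> \<O>\<^sub>K) \<subseteq> \<O>"
    "\<And>z z'. z \<in> \<O>\<^sub>K \<times> \<O>\<^sub>K \<Longrightarrow> z' \<in> \<O>\<^sub>K \<times> \<O>\<^sub>K \<Longrightarrow>
       rel_prod (val_cong 1) (val_cong 1) z z' \<Longrightarrow> val_cong 2 (f z) (f z')"
    "\<And>y. y \<in> \<O> \<Longrightarrow> \<exists>z\<in>\<O>\<^sub>K \<times> \<O>\<^sub>K. val_cong 2 y (f z)"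
  proof -
    have "V 0 p" using p by (simp add: val_ge_def)
    then show "f ` (\<O>\<^sub>K \<times> \<O>\<^sub>K) \<subseteq> \<O>"
      using val_ge_add val_ge_0_times by (auto simp: f_def)
  next
    fix z z' assume zz': "z \<in> \<O>\<^sub>K \<times> \<O>\<^sub>K" "z' \<in> \<O>\<^sub>K \<times> \<O>\<^sub>K" "rel_prod (val_cong 1) (val_cong 1) z z'"
    have "f z - f z' = (fst z - fst z') + (snd z - snd z') * p" by (simp add: f_def algebra_simps)
    moreover have "V 2 (fst z - fst z')"
      using zz' val_ge_2_if_ramified[OF assms(2), of "fst z - fst z'"] by (auto simp: rel_prod_sel t_diff)
    moreover have "V (1 + 1) ((snd z - snd z') * p)"
      using zz' val_ge_mult[of 1 "snd z - snd z'" 1 p] p by (auto simp: rel_prod_sel val_ge_def)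
    ultimately show "val_cong 2 (f z) (f z')" using val_ge_add by fastforce
  next
    fix y assume y: "y \<in> \<O>"
    obtain a where a: "a \<in> \<O>\<^sub>K" "val_cong 1 y a" using lift y by auto
    have "V 0 ((y - a) / p)" using a(2) p by (simp add: val_ge_divide_iff)
    then obtain b where b: "b \<in> \<O>\<^sub>K" "val_cong 1 ((y - a) / p) b" using lift by blast
    have "y - f (a, b) = p * ((y - a) / p - b)" using p by (simp add: f_def field_simps)
    moreover have "V 2 (p * ((y - a) / p - b))" using b(2) p by (simp add: val_ge_mult_iff)
    ultimately show "\<exists>z\<in>\<O>\<^sub>K \<times> \<O>\<^sub>K. val_cong 2 y (f z)" using a(1) b(1) by (intro bexI[of _ "(a, b)"]) auto
  qed
  note Times = card_classes_Times[OF equivp_val_cong finite_residue_classes[OF integers_K_subset]]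
  show "finite (classes \<O> (val_cong 2))" "card (classes \<O> (val_cong 2)) \<le> q ^ 2"
    using finite_classes_if_surj[OF equivp_rel_prod[OF equivp_val_cong] equivp_val_cong surj Times(1)]
      card_classes_le_if_surj[OF equivp_rel_prod[OF equivp_val_cong] equivp_val_cong surj Times(1)]
      Times(2) by auto
qed

lemma card_C_filt_quotient_le:
  assumes "finite (classes \<O> (val_cong e))"
  shows "finite (classes (C_filt w t lam n) (val_cong (e * int (Suc n))))"
    and "card (classes (C_filt w t lam n) (val_cong (e * int (Suc n)))) \<le> card (classes \<O> (val_cong e))"
proof -
  have ln: "lam ^ n \<noteq> 0" "e + w (lam ^ n) = e * int (Suc n)"
    using lam by (simp_all add: w_power algebra_simps)
  let ?f = "\<lambda>x. (x - 1) / lam ^ n"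
  have maps: "?f ` C_filt w t lam n \<subseteq> \<O>"
  proof
    fix z assume "z \<in> ?f ` C_filt w t lam n"
    then obtain x where "x \<in> C_filt w t lam n" "z = ?f x" by blast
    then show "z \<in> \<O>" using ln lam by (simp add: C_filt_eq val_ge_divide_iff w_power mult.commute)
  qed
  have reflects: "val_cong (e * int (Suc n)) x y" if "val_cong e (?f x) (?f y)" for x y
  proof -
    have "?f x - ?f y = (x - y) / lam ^ n" by (simp add: diff_divide_distrib)
    then show ?thesis using that ln by (simp add: val_ge_divide_iff)
  qed
  show "finite (classes (C_filt w t lam n) (val_cong (e * int (Suc n))))"
    by (rule finite_classes_if_inj[OF equivp_val_cong equivp_val_cong maps reflects assms])
  show "card (classes (C_filt w t lam n) (val_cong (e * int (Suc n)))) \<le> card (classes \<O> (val_cong e))"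
    by (rule card_classes_le_if_inj[OF equivp_val_cong equivp_val_cong maps reflects assms])
qed

lemma card_C_filt_quotient_le_if_even:
  assumes "ell = 2"
  shows "finite (classes (C_filt w t lam n) (val_cong (e * int (Suc n))))"
    and "card (classes (C_filt w t lam n) (val_cong (e * int (Suc n)))) \<le> q ^ 2"
proof -
  have fin: "finite (classes \<O> (val_cong e))" and le: "card (classes \<O> (val_cong e)) \<le> q ^ 2"
  proof (atomize (full), cases "e = 1")
    case True
    then show "finite (classes \<O> (val_cong e)) \<and> card (classes \<O> (val_cong e)) \<le> q ^ 2"
      using finite_residue_classes[OF subset_refl] card_residue_field_le_sq_if_even[OF assms] by simp
  next
    case False
    then have "e = 2" using ram_index_cases by blast
    then show "finite (classes \<O> (val_cong e)) \<and> card (classes \<O> (val_cong e)) \<le> q ^ 2"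
      using card_integers_mod_2_le_sq_if_even[OF assms] by simp
  qed
  show "finite (classes (C_filt w t lam n) (val_cong (e * int (Suc n))))"
    using card_C_filt_quotient_le(1)[OF fin] .
  show "card (classes (C_filt w t lam n) (val_cong (e * int (Suc n)))) \<le> q ^ 2"
    using card_C_filt_quotient_le(2)[OF fin] le by (rule le_trans)
qed

end


theorem lemma6p3:
  fixes w :: "'a::field_char_0 \<Rightarrow> int" and t :: "'a \<Rightarrow> 'a" and lam :: 'a and ell :: nat
  assumes "prime ell"
    and "ell_adic_local_field ell w"
    and "field_aut t" and "t \<circ> t = id" and "t \<noteq> id"
    and "is_uniformizer w (fixed_field t) lam"
  shows "(ell \<noteq> 2 \<longrightarrow>
            (ram_index w (fixed_field t) > 1 \<longrightarrow>
               card (quot_cosets (C_filt w t lam 0) (C_filt w t lam 1))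
                 = 2 * ell ^ inertia_degree ell w (fixed_field t)) \<and>
            (ram_index w (fixed_field t) = 1 \<longrightarrow>
               card (quot_cosets (C_filt w t lam 0) (C_filt w t lam 1))
                 = ell ^ inertia_degree ell w (fixed_field t) + 1)) \<and>
         (ell = 2 \<longrightarrow>
            (\<forall>n::nat. real n \<le> v_lam w lam 2 \<longrightarrow>
               finite (quot_cosets (C_filt w t lam n) (C_filt w t lam (Suc n))) \<and>
               card (quot_cosets (C_filt w t lam n) (C_filt w t lam (Suc n)))
                 \<le> 4 ^ inertia_degree ell w (fixed_field t)))"
proof -
  interpret involutive_local_field w ell t lam
    using assms by unfold_locales (auto simp: ell_adic_local_field_def)
  have level_0: "quot_cosets (C_filt w t lam 0) (C_filt w t lam 1) = classes (C_grp w t) (val_cong e)"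
    using quot_cosets_eq_classes[of 0] by (simp add: C_filt_0)
  have "q ^ 2 = 4 ^ inertia_degree ell w K" if "ell = 2"
    using card_residue_field_K that power_mult[of "2::nat" 2 "inertia_degree ell w K"]
    by (simp add: power_mult_distrib[symmetric] power_mult[symmetric] mult.commute)
  then show ?thesis
    using level_0 quot_cosets_eq_classes card_residue_field_K ram_index_cases
      card_C_mod_2_ramified card_C_mod_1_unramified card_C_filt_quotient_le_if_even
    by auto
qed

end
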